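(* For every $\hbar\in H$, the product $\star_\hbar:\mathcal{P}(D_n)\times\mathcal{P}(D_n)\to\mathcal{P}(D_n)$ is continuous with respect to the locally convex topology on $\mathcal{P}(D_n)$ defined by the norms $\|\cdot\|_{D_n,\rho}$ for all $\rho>0$.
   Context: Fix $n\ge1$; indices $\mu,\nu\in\{0,\dots,n\}$. Multi-index conventions: $|P|=\sum P_i$, $P!=\prod P_i!$, $\binom{P}{T}=\prod\binom{P_i}{T_i}$, $\le$ and $\min$ componentwise, $P'=(P_1,\dots,P_n)$ for $P\in\mathbb{N}_0^{1+n}$. $D_n=Z/U(1)$ with $Z=\{r\in\mathbb{C}^{1+n}:-|r^0|^2+\sum_{i\ge1}|r^i|^2=-1\}$ and $U(1)$ acting by scalars; it is identified with the open unit ball of $\mathbb{C}^n$ via $w^i=r^i/r^0$, $w\cdot\bar w=\sum|w^i|^2$. For $P,Q\in\mathbb{N}_0^{1+n}$ with $|P|=|Q|$ let $f_{P,Q}([r])=r^P\bar r^Q=w^{P'}\bar w^{Q'}/(1-w\cdot\bar w)^{|P|}$, and $\mathcal{P}(D_n)$ their span. For $P,Q\in\mathbb{N}_0^n$ let $f_{r,P,Q}=w^P\bar w^Q/(1-w\cdot\bar w)^{\max\{|P|,|Q|\}}$; these form a basis of $\mathcal{P}(D_n)$. For $\rho>0$, $\|\sum a_{P,Q}f_{r,P,Q}\|_{D_n,\rho}=\sum|a_{P,Q}|\rho^{|P+Q|}$. $H=\mathbb{C}\setminus(\{0\}\cup\{-1/(2m):m\in\mathbb{N}\})$; $(z)_m=\prod_{k=0}^{m-1}(z+k)$.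 For $\hbar\in H$, $\star_\hbar$ is the bilinear product on $\mathcal{P}(D_n)$ obtained by reduction of the Wick product: with $d_{P,Q}=z^P\bar z^Q$ on $\mathbb{C}^{1+n}$, $d_{P,Q}\tilde\star_\hbar d_{R,S}=\sum_{T\le\min\{P,S\}}(-1)^{T_0}(2\hbar)^{|T|}T!\binom PT\binom ST d_{P+R-T,Q+S-T}$, and $\Psi_\hbar(d_{P,Q})=(2\hbar)^{|P|}(\frac1{2\hbar})_{|P|}f_{P,Q}$ (for $|P|=|Q|$), one sets $a\star_\hbar b=\Psi_\hbar(a'\tilde\star_\hbar b')$ for any $U(1)$-invariant polynomial preimages $a',b'$ of $a,b$ under $\Psi_\hbar$ (this is well defined). Explicitly $f_{P,Q}\star_\hbar f_{R,S}=\sum_{T\in\mathbb{N}_0^{1+n},T\le\min\{P,S\}}(-1)^{T_0}\frac{(\frac1{2\hbar})_{|P+S-T|}T!}{(\frac1{2\hbar})_{|P|}(\frac1{2\hbar})_{|S|}}\binom PT\binom ST f_{P+R-T,Q+S-T}$. *)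

theory Defs
  imports "HOL-Analysis.Analysis"
begin

text \<open>A multi-index in N_0^k is a function nat => nat vanishing from index k on.
  Indices 0..n (k = Suc n) are used for N_0^(1+n), indices 0..n-1 for N_0^n.\<close>

definition mi :: "nat \<Rightarrow> (nat \<Rightarrow> nat) set" where
  "mi k = {P. \<forall>i\<ge>k. P i = 0}"

definition msize :: "nat \<Rightarrow> (nat \<Rightarrow> nat) \<Rightarrow> nat" where
  "msize k P = (\<Sum>i<k. P i)"

definition mfact :: "nat \<Rightarrow> (nat \<Rightarrow> nat) \<Rightarrow> nat" where
  "mfact k P = (\<Prod>i<k. fact (P i))"

definition mbinom :: "nat \<Rightarrow> (nat \<Rightarrow> nat) \<Rightarrow> (nat \<Rightarrow> nat) \<Rightarrow> nat" where
  "mbinom k P T = (\<Prod>i<k. P i choose T i)"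

definition mtail :: "(nat \<Rightarrow> nat) \<Rightarrow> (nat \<Rightarrow> nat)" where
  "mtail P = (\<lambda>i. P (Suc i))"

text \<open>Points w = (w^1,...,w^n) are stored as w 0, ..., w (n-1); other entries are 0.\<close>

definition wnorm2 :: "nat \<Rightarrow> (nat \<Rightarrow> complex) \<Rightarrow> real" where
  "wnorm2 n w = (\<Sum>i<n. (cmod (w i))\<^sup>2)"

definition Dball :: "nat \<Rightarrow> (nat \<Rightarrow> complex) set" where
  "Dball n = {w. (\<forall>i\<ge>n. w i = 0) \<and> wnorm2 n w < 1}"

definition wpow :: "nat \<Rightarrow> (nat \<Rightarrow> complex) \<Rightarrow> (nat \<Rightarrow> nat) \<Rightarrow> complex" where
  "wpow n w P = (\<Prod>i<n. w i ^ P i)"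

definition wbpow :: "nat \<Rightarrow> (nat \<Rightarrow> complex) \<Rightarrow> (nat \<Rightarrow> nat) \<Rightarrow> complex" where
  "wbpow n w Q = (\<Prod>i<n. cnj (w i) ^ Q i)"

text \<open>Functions on D_n are modelled as functions on all points, vanishing off the ball.\<close>

text \<open>f_{P,Q} for P,Q in N_0^(1+n), |P| = |Q|:  w^{P'} wbar^{Q'} / (1 - w.wbar)^{|P|}.\<close>
definition fPQ :: "nat \<Rightarrow> (nat \<Rightarrow> nat) \<Rightarrow> (nat \<Rightarrow> nat) \<Rightarrow> (nat \<Rightarrow> complex) \<Rightarrow> complex" where
  "fPQ n P Q w = (if w \<in> Dball n then
     wpow n w (mtail P) * wbpow n w (mtail Q) / (1 - complex_of_real (wnorm2 n w)) ^ msize (Suc n) P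
   else 0)"

definition frPQ :: "nat \<Rightarrow> (nat \<Rightarrow> nat) \<Rightarrow> (nat \<Rightarrow> nat) \<Rightarrow> (nat \<Rightarrow> complex) \<Rightarrow> complex" where
  "frPQ n P Q w = (if w \<in> Dball n then
     wpow n w P * wbpow n w Q / (1 - complex_of_real (wnorm2 n w)) ^ max (msize n P) (msize n Q)
   else 0)"

definition coeffs_ok :: "nat \<Rightarrow> ((nat \<Rightarrow> nat) \<times> (nat \<Rightarrow> nat) \<Rightarrow> complex) \<Rightarrow> bool" where
  "coeffs_ok n a \<longleftrightarrow> finite {x. a x \<noteq> 0} \<and> {x. a x \<noteq> 0} \<subseteq> mi n \<times> mi n"

definition comb :: "nat \<Rightarrow> ((nat \<Rightarrow> nat) \<times> (nat \<Rightarrow> nat) \<Rightarrow> complex) \<Rightarrow> (nat \<Rightarrow> complex) \<Rightarrow> complex" where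
  "comb n a = (\<lambda>w. \<Sum>x\<in>{x. a x \<noteq> 0}. a x * frPQ n (fst x) (snd x) w)"

text \<open>P(D_n) = span of the f_{r,P,Q} (equivalently of the f_{P,Q}).\<close>
definition PD :: "nat \<Rightarrow> ((nat \<Rightarrow> complex) \<Rightarrow> complex) set" where
  "PD n = {comb n a | a. coeffs_ok n a}"

text \<open>Coefficients with respect to the basis f_{r,P,Q} (unique since it is a basis).\<close>
definition coeff :: "nat \<Rightarrow> ((nat \<Rightarrow> complex) \<Rightarrow> complex) \<Rightarrow> ((nat \<Rightarrow> nat) \<times> (nat \<Rightarrow> nat) \<Rightarrow> complex)" where
  "coeff n g = (THE a. coeffs_ok n a \<and> comb n a = g)"

definition Dnorm :: "nat \<Rightarrow> real \<Rightarrow> ((nat \<Rightarrow> complex) \<Rightarrow> complex) \<Rightarrow> real" where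
  "Dnorm n \<rho> g = (\<Sum>x\<in>{x. coeff n g x \<noteq> 0}.
      cmod (coeff n g x) * \<rho> ^ (msize n (fst x) + msize n (snd x)))"

definition Dtop :: "nat \<Rightarrow> ((nat \<Rightarrow> complex) \<Rightarrow> complex) topology" where
  "Dtop n = topology (\<lambda>U. U \<subseteq> PD n \<and>
     (\<forall>g\<in>U. \<exists>F e. finite F \<and> F \<subseteq> {0<..} \<and> e > 0 \<and>
        {g'\<in>PD n. \<forall>\<rho>\<in>F. Dnorm n \<rho> (\<lambda>w. g' w - g w) < e} \<subseteq> U))"

definition Hset :: "complex set" where
  "Hset = - ({0} \<union> {- 1 / (2 * of_nat m) | m. m \<ge> 1})"

definition starf :: "nat \<Rightarrow> complex \<Rightarrow> (nat \<Rightarrow> nat) \<Rightarrow> (nat \<Rightarrow> nat) \<Rightarrow> (nat \<Rightarrow> nat) \<Rightarrow> (nat \<Rightarrow> nat)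
     \<Rightarrow> (nat \<Rightarrow> complex) \<Rightarrow> complex" where
  "starf n h P Q R S = (\<lambda>w. \<Sum>T\<in>{T\<in>mi (Suc n). \<forall>i. T i \<le> min (P i) (S i)}.
     (-1) ^ T 0 * pochhammer (1 / (2 * h)) (msize (Suc n) (\<lambda>i. P i + S i - T i))
       * of_nat (mfact (Suc n) T)
       / (pochhammer (1 / (2 * h)) (msize (Suc n) P) * pochhammer (1 / (2 * h)) (msize (Suc n) S))
       * of_nat (mbinom (Suc n) P T) * of_nat (mbinom (Suc n) S T)
       * fPQ n (\<lambda>i. P i + R i - T i) (\<lambda>i. Q i + S i - T i) w)"

text \<open>f_{r,P,Q} = f_{(m-|P|,P),(m-|Q|,Q)} with m = max(|P|,|Q|): the lift to N_0^(1+n).\<close>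
definition lift :: "nat \<Rightarrow> nat \<Rightarrow> (nat \<Rightarrow> nat) \<Rightarrow> (nat \<Rightarrow> nat)" where
  "lift n m P = (\<lambda>i. if i = 0 then m - msize n P else P (i - 1))"

definition liftL :: "nat \<Rightarrow> (nat \<Rightarrow> nat) \<times> (nat \<Rightarrow> nat) \<Rightarrow> (nat \<Rightarrow> nat)" where
  "liftL n x = lift n (max (msize n (fst x)) (msize n (snd x))) (fst x)"

definition liftR :: "nat \<Rightarrow> (nat \<Rightarrow> nat) \<times> (nat \<Rightarrow> nat) \<Rightarrow> (nat \<Rightarrow> nat)" where
  "liftR n x = lift n (max (msize n (fst x)) (msize n (snd x))) (snd x)"

definition star :: "nat \<Rightarrow> complex \<Rightarrow> ((nat \<Rightarrow> complex) \<Rightarrow> complex) \<Rightarrow> ((nat \<Rightarrow> complex) \<Rightarrow> complex)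
     \<Rightarrow> ((nat \<Rightarrow> complex) \<Rightarrow> complex)" where
  "star n h g1 g2 = (\<lambda>w. \<Sum>x\<in>{x. coeff n g1 x \<noteq> 0}. \<Sum>y\<in>{y. coeff n g2 y \<noteq> 0}.
     coeff n g1 x * coeff n g2 y * starf n h (liftL n x) (liftR n x) (liftL n y) (liftR n y) w)"

end

theory Submission
  imports Defs "HOL-Library.Function_Algebras"
begin

(* The f_{r,P,Q} are linearly independent: restricted to a ray t w, a vanishing combination
   keeps its lowest-bidegree part in the limit t -> 0, and a polynomial in w and cnj w that
   vanishes near 0 has zero coefficients. So coefficients are unique and ||.||_{D_n,rho} is a
   weighted l^1-norm of them. Expanding (1 - |w|^2)^(-k) binomially and writing
   |w|^2 = sum_i w_i cnj(w_i) gives ||f_{P,Q}||_rho <= (max(1,rho)^2 (n+1))^|P|. Since 1/(2 hbar)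
   is not a non-positive integer, delta^k k! <= |(1/(2 hbar))_k| <= C^k k!, so the structure
   constants of star_hbar grow at most geometrically in |P| + |S|. Hence
   ||a star b||_rho <= ||a||_L ||b||_L for some L depending on rho, and a bilinear product with
   such bounds is jointly continuous for the topology of the seminorms. *)

section \<open>Linear independence of the basis\<close>

lemma coeff_sum_eq_0_if_vanishes_on_infinite:
  fixes c :: "'a \<Rightarrow> 'b::idom"
  assumes S: "finite S" and X: "infinite X"
    and vanish: "\<And>x. x \<in> X \<Longrightarrow> (\<Sum>s\<in>S. c s * x ^ g s) = 0"
  shows "(\<Sum>s\<in>{s\<in>S. g s = k}. c s) = 0"
proof -
  define p where "p = (\<Sum>s\<in>S. monom (c s) (g s))"
  have poly_p: "poly p x = (\<Sum>s\<in>S. c s * x ^ g s)" for x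
    unfolding p_def by (simp add: poly_sum poly_monom)
  have "p = 0"
  proof (rule ccontr)
    assume "p \<noteq> 0"
    then have "finite {x. poly p x = 0}" by (rule poly_roots_finite)
    moreover have "X \<subseteq> {x. poly p x = 0}" using vanish poly_p by auto
    ultimately show False using X finite_subset by blast
  qed
  have "Polynomial.coeff p k = (\<Sum>s\<in>S. if g s = k then c s else 0)"
    unfolding p_def by (simp add: coeff_sum coeff_monom eq_commute)
  also have "\<dots> = (\<Sum>s\<in>{s\<in>S. g s = k}. c s)"
    using S by (simp add: sum.inter_filter)
  finally show ?thesis using \<open>p = 0\<close> by simp
qed

lemma infinite_unit_circle: "infinite {u::complex. cmod u = 1}"
proof -
  let ?f = "\<lambda>a::real. Complex a (sqrt (1 - a\<^sup>2))"
  have "inj_on ?f {0<..<1}" by (rule inj_onI) (metis complex.sel(1))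
  then have "infinite (?f ` {0<..<1})" by (simp add: finite_image_iff)
  moreover have "?f ` {0<..<1} \<subseteq> {u. cmod u = 1}"
    by (auto simp: cmod_def power_le_one)
  ultimately show ?thesis using finite_subset by blast
qed

text \<open>Separating monomials z^a cnj(z)^b: on the circle |z| = t they become
  t^(a+b) u^(a-b), so one compares first coefficients in u, then in t.\<close>

lemma z_cnj_coeff_sum_eq_0:
  fixes C :: "'a \<Rightarrow> complex"
  assumes S: "finite S" and \<epsilon>: "\<epsilon> > 0"
    and vanish: "\<And>z. cmod z < \<epsilon> \<Longrightarrow> (\<Sum>s\<in>S. C s * z ^ g1 s * cnj z ^ g2 s) = 0"
  shows "(\<Sum>s\<in>{s\<in>S. g1 s = a \<and> g2 s = b}. C s) = 0"
proof -
  define M where "M = max b (Max (insert 0 (g2 ` S)))"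
  have M: "g2 s \<le> M" if "s \<in> S" for s
    unfolding M_def using S that by (intro max.coboundedI2 Max_ge) auto
  have bM: "b \<le> M" unfolding M_def by simp
  have circle: "(\<Sum>s\<in>{s\<in>S. g1 s + M - g2 s = k}. C s * of_real t ^ (g1 s + g2 s)) = 0"
    if t: "0 < t" "t < \<epsilon>" for t k
  proof (rule coeff_sum_eq_0_if_vanishes_on_infinite[OF S infinite_unit_circle])
    fix u :: complex assume u: "u \<in> {u. cmod u = 1}"
    then have u0: "u \<noteq> 0" by auto
    have cnj_u: "cnj u = inverse u"
      using u complex_norm_square[of u] by (intro inverse_unique[symmetric]) simp
    have "(\<Sum>s\<in>S. C s * of_real t ^ (g1 s + g2 s) * u ^ (g1 s + M - g2 s))
        = u ^ M * (\<Sum>s\<in>S. C s * (of_real t * u) ^ g1 s * cnj (of_real t * u) ^ g2 s)"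
      unfolding sum_distrib_left
    proof (rule sum.cong[OF refl])
      fix s assume s: "s \<in> S"
      have "u ^ (g1 s + M - g2 s) = u ^ g1 s * u ^ M * inverse u ^ g2 s"
        using M[OF s] u0
        by (simp add: power_add power_diff divide_inverse power_inverse flip: add_diff_assoc)
      then show "C s * of_real t ^ (g1 s + g2 s) * u ^ (g1 s + M - g2 s) =
          u ^ M * (C s * (of_real t * u) ^ g1 s * cnj (of_real t * u) ^ g2 s)"
        by (simp add: cnj_u power_mult_distrib power_add)
    qed
    also have "\<dots> = 0"
      using vanish[of "of_real t * u"] u t by (simp add: norm_mult)
    finally show "(\<Sum>s\<in>S. C s * of_real t ^ (g1 s + g2 s) * u ^ (g1 s + M - g2 s)) = 0" .
  qed
  have "(\<Sum>s\<in>{s\<in>{s\<in>S. g1 s + M - g2 s = a + M - b}. g1 s + g2 s = a + b}. C s) = 0"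
  proof (rule coeff_sum_eq_0_if_vanishes_on_infinite[where X="of_real ` {0<..<\<epsilon>}"])
    show "infinite (complex_of_real ` {0<..<\<epsilon>})"
      using \<epsilon> by (simp add: finite_image_iff inj_on_def)
  qed (use S circle in auto)
  moreover have "{s\<in>{s\<in>S. g1 s + M - g2 s = a + M - b}. g1 s + g2 s = a + b}
      = {s\<in>S. g1 s = a \<and> g2 s = b}"
    using M bM by auto
  ultimately show ?thesis by simp
qed

lemma wpow_upd: "wpow (Suc n) (w(n := z)) P = wpow n w P * z ^ P n"
  unfolding wpow_def by (simp add: prod.lessThan_Suc)

lemma wbpow_upd: "wbpow (Suc n) (w(n := z)) P = wbpow n w P * cnj z ^ P n"
  unfolding wbpow_def by (simp add: prod.lessThan_Suc)

lemma wpow_wbpow_coeff_sum_eq_0: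
  fixes c :: "'a \<Rightarrow> complex" and F1 F2 :: "'a \<Rightarrow> nat \<Rightarrow> nat"
  assumes "finite S" "\<epsilon> > 0"
    and "\<And>w. \<forall>i\<ge>n. w i = 0 \<Longrightarrow> \<forall>i<n. cmod (w i) < \<epsilon> \<Longrightarrow>
          (\<Sum>s\<in>S. c s * wpow n w (F1 s) * wbpow n w (F2 s)) = 0"
  shows "(\<Sum>s\<in>{s\<in>S. \<forall>i<n. F1 s i = A i \<and> F2 s i = B i}. c s) = 0"
  using assms
proof (induction n arbitrary: S)
  case 0
  then show ?case using "0.prems"(3)[of "\<lambda>_. 0"] by (simp add: wpow_def wbpow_def)
next
  case (Suc n)
  define S' where "S' = {s\<in>S. F1 s n = A n \<and> F2 s n = B n}"
  have vanish': "(\<Sum>s\<in>S'. c s * wpow n w (F1 s) * wbpow n w (F2 s)) = 0"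
    if w0: "\<forall>i\<ge>n. w i = 0" and w_small: "\<forall>i<n. cmod (w i) < \<epsilon>" for w
    unfolding S'_def
  proof (rule z_cnj_coeff_sum_eq_0[OF Suc.prems(1,2)])
    fix z :: complex assume z: "cmod z < \<epsilon>"
    have "(\<Sum>s\<in>S. c s * wpow (Suc n) (w(n := z)) (F1 s) * wbpow (Suc n) (w(n := z)) (F2 s)) = 0"
      by (rule Suc.prems(3)) (use w0 w_small z in \<open>auto simp: less_Suc_eq\<close>)
    then show "(\<Sum>s\<in>S. c s * wpow n w (F1 s) * wbpow n w (F2 s) * z ^ F1 s n * cnj z ^ F2 s n) = 0"
      by (simp add: wpow_upd wbpow_upd mult_ac)
  qed
  have "finite S'" using Suc.prems(1) unfolding S'_def by simp
  then have "(\<Sum>s\<in>{s\<in>S'. \<forall>i<n. F1 s i = A i \<and> F2 s i = B i}. c s) = 0"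
    using Suc.IH Suc.prems(2) vanish' by blast
  moreover have "{s\<in>S'. \<forall>i<n. F1 s i = A i \<and> F2 s i = B i}
      = {s\<in>S. \<forall>i<Suc n. F1 s i = A i \<and> F2 s i = B i}"
    unfolding S'_def by (auto simp: less_Suc_eq)
  ultimately show ?case by simp
qed

definition bideg :: "nat \<Rightarrow> (nat \<Rightarrow> nat) \<times> (nat \<Rightarrow> nat) \<Rightarrow> nat" where
  "bideg n x = msize n (fst x) + msize n (snd x)"

definition maxdeg :: "nat \<Rightarrow> (nat \<Rightarrow> nat) \<times> (nat \<Rightarrow> nat) \<Rightarrow> nat" where
  "maxdeg n x = max (msize n (fst x)) (msize n (snd x))"

lemma maxdeg_le_bideg: "maxdeg n x \<le> bideg n x"
  unfolding maxdeg_def bideg_def by simp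

lemma comb_eq_sum_over:
  assumes "finite X" "{x. c x \<noteq> 0} \<subseteq> X"
  shows "comb n c w = (\<Sum>x\<in>X. c x * frPQ n (fst x) (snd x) w)"
  unfolding comb_def by (rule sum.mono_neutral_left) (use assms in auto)

lemma coeffs_ok_add:
  assumes "coeffs_ok n a" "coeffs_ok n b"
  shows "coeffs_ok n (\<lambda>x. a x + b x)"
proof -
  have "{x. a x + b x \<noteq> 0} \<subseteq> {x. a x \<noteq> 0} \<union> {x. b x \<noteq> 0}" by auto
  then show ?thesis using assms unfolding coeffs_ok_def by (meson finite_Un finite_subset subset_trans Un_least)
qed

lemma coeffs_ok_scale:
  assumes "coeffs_ok n a"
  shows "coeffs_ok n (\<lambda>x. k * a x)"
proof -
  have "{x. k * a x \<noteq> 0} \<subseteq> {x. a x \<noteq> 0}" by auto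
  then show ?thesis using assms unfolding coeffs_ok_def by (meson finite_subset subset_trans)
qed

lemma coeffs_ok_zero: "coeffs_ok n (\<lambda>x. 0)"
  unfolding coeffs_ok_def by simp

lemma comb_add:
  assumes "coeffs_ok n a" "coeffs_ok n b"
  shows "comb n (\<lambda>x. a x + b x) w = comb n a w + comb n b w"
proof -
  have X: "finite ({x. a x \<noteq> 0} \<union> {x. b x \<noteq> 0})" using assms unfolding coeffs_ok_def by simp
  show ?thesis by (subst (1 2 3) comb_eq_sum_over[OF X]) (auto simp: sum.distrib algebra_simps)
qed

lemma comb_scale:
  assumes "coeffs_ok n a"
  shows "comb n (\<lambda>x. k * a x) w = k * comb n a w"
proof -
  have X: "finite {x. a x \<noteq> 0}" using assms unfolding coeffs_ok_def by simp
  show ?thesis by (subst (1 2) comb_eq_sum_over[OF X]) (auto simp: sum_distrib_left algebra_simps)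
qed

lemma continuous_eq_0_if_vanishes_at_right:
  fixes f :: "real \<Rightarrow> 'a::t2_space"
  assumes "isCont f 0" and "\<And>t. 0 < t \<Longrightarrow> t < 1 \<Longrightarrow> f t = c"
  shows "f 0 = c"
proof -
  have "(f \<longlongrightarrow> f 0) (at_right 0)"
    using assms(1) unfolding isCont_def filterlim_at_split by simp
  moreover have "eventually (\<lambda>t. t \<in> {0<..<1}) (at_right (0::real))"
    by (rule eventually_at_right_real) simp
  then have "eventually (\<lambda>t. f t = c) (at_right 0)"
    by eventually_elim (use assms(2) in auto)
  then have "(f \<longlongrightarrow> c) (at_right 0)"
    by (rule tendsto_eventually)
  ultimately show ?thesis by (rule tendsto_unique[OF trivial_limit_at_right_real])
qed

lemma wpow_scale: "wpow n (\<lambda>i. of_real t * w i) P = of_real t ^ msize n P * wpow n w P"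
  unfolding wpow_def msize_def by (simp add: power_mult_distrib prod.distrib power_sum)

lemma wbpow_scale: "wbpow n (\<lambda>i. of_real t * w i) P = of_real t ^ msize n P * wbpow n w P"
  unfolding wbpow_def msize_def by (simp add: power_mult_distrib prod.distrib power_sum)

lemma wnorm2_scale: "wnorm2 n (\<lambda>i. of_real t * w i) = t\<^sup>2 * wnorm2 n w"
  unfolding wnorm2_def by (simp add: norm_mult power_mult_distrib sum_distrib_left)

lemma wnorm2_nonneg: "0 \<le> wnorm2 n w"
  unfolding wnorm2_def by (simp add: sum_nonneg)

lemma wnorm2_lt_1:
  assumes "\<forall>i<n. cmod (w i) < 1 / real (Suc n)"
  shows "wnorm2 n w < 1"
proof -
  have "wnorm2 n w \<le> (\<Sum>i<n. 1 / real (Suc n))" unfolding wnorm2_def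
  proof (rule sum_mono)
    fix i assume "i \<in> {..<n}"
    then have "cmod (w i) < 1 / real (Suc n)" using assms by auto
    then have "(cmod (w i))\<^sup>2 \<le> (1 / real (Suc n))\<^sup>2" by (simp add: power_mono)
    also have "\<dots> \<le> 1 / real (Suc n)" using power_decreasing[of 1 2 "1 / real (Suc n)"] by simp
    finally show "(cmod (w i))\<^sup>2 \<le> 1 / real (Suc n)" .
  qed
  also have "\<dots> < 1" by simp
  finally show ?thesis .
qed

lemma frPQ_scale:
  assumes "(\<lambda>i. of_real t * w i) \<in> Dball n"
  shows "frPQ n (fst x) (snd x) (\<lambda>i. of_real t * w i) = of_real t ^ bideg n x
      * wpow n w (fst x) * wbpow n w (snd x) / (1 - of_real (t\<^sup>2 * wnorm2 n w)) ^ maxdeg n x"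
  using assms unfolding frPQ_def bideg_def maxdeg_def
  by (simp add: wpow_scale wbpow_scale wnorm2_scale power_add)

text \<open>Restricting to the ray t w and dividing by t^d, the limit t \<rightarrow> 0 isolates the
  homogeneous part of bidegree d.\<close>

lemma comb_lowest_degree_part_eq_0:
  assumes ok: "coeffs_ok n c" and comb0: "\<And>w. comb n c w = 0"
    and low: "\<And>s. c s \<noteq> 0 \<Longrightarrow> d \<le> bideg n s"
    and w0: "\<forall>i\<ge>n. w i = 0" and w_small: "\<forall>i<n. cmod (w i) < 1 / real (Suc n)"
  shows "(\<Sum>s\<in>{s. c s \<noteq> 0 \<and> bideg n s = d}. c s * wpow n w (fst s) * wbpow n w (snd s)) = 0"
proof -
  define S where "S = {s. c s \<noteq> 0}"
  have "finite S" using ok unfolding coeffs_ok_def S_def by simp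
  define x where "x = wnorm2 n w"
  have x: "0 \<le> x" "x < 1" unfolding x_def using wnorm2_nonneg wnorm2_lt_1[OF w_small] by auto
  define G where "G t = (\<Sum>s\<in>S. c s * of_real t ^ (bideg n s - d)
      * wpow n w (fst s) * wbpow n w (snd s) / (1 - of_real (t\<^sup>2 * x)) ^ maxdeg n s)" for t
  have "G t = 0" if t: "0 < t" "t < 1" for t
  proof -
    have "t\<^sup>2 * x \<le> x" using x t by (intro mult_left_le_one_le) (auto simp: power_le_one)
    then have "t\<^sup>2 * x < 1" using x by linarith
    then have ray: "(\<lambda>i. of_real t * w i) \<in> Dball n"
      unfolding Dball_def using w0 by (simp add: wnorm2_scale x_def)
    have "of_real t ^ d * G t = comb n c (\<lambda>i. of_real t * w i)"
      unfolding G_def comb_def S_def sum_distrib_left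
    proof (rule sum.cong[OF refl])
      fix s assume "s \<in> {s. c s \<noteq> 0}"
      then have "of_real t ^ d * of_real t ^ (bideg n s - d) = (of_real t ^ bideg n s :: complex)"
        using low by (simp flip: power_add)
      then show "of_real t ^ d * (c s * of_real t ^ (bideg n s - d) * wpow n w (fst s)
          * wbpow n w (snd s) / (1 - of_real (t\<^sup>2 * x)) ^ maxdeg n s)
          = c s * frPQ n (fst s) (snd s) (\<lambda>i. of_real t * w i)"
        by (simp add: frPQ_scale[OF ray] x_def)
    qed
    then show "G t = 0" using comb0 t by simp
  qed
  moreover have "isCont G 0" unfolding G_def by (intro continuous_intros) auto
  ultimately have "G 0 = 0" using continuous_eq_0_if_vanishes_at_right by blast
  have "G 0 = (\<Sum>s\<in>S. if bideg n s = d then c s * wpow n w (fst s) * wbpow n w (snd s) else 0)"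
    unfolding G_def by (rule sum.cong) (use low S_def in \<open>auto simp: le_antisym\<close>)
  also have "\<dots> = (\<Sum>s\<in>{s\<in>S. bideg n s = d}. c s * wpow n w (fst s) * wbpow n w (snd s))"
    by (rule sum.inter_filter[symmetric, OF \<open>finite S\<close>])
  finally show ?thesis using \<open>G 0 = 0\<close> unfolding S_def by simp
qed

lemma mi_eq:
  assumes "P \<in> mi n" "Q \<in> mi n" "\<forall>i<n. P i = Q i"
  shows "P = Q"
proof
  fix i show "P i = Q i" using assms unfolding mi_def by (cases "i < n") auto
qed

lemma comb_eq_0_imp_coeffs_0:
  assumes ok: "coeffs_ok n c" and comb0: "\<And>w. comb n c w = 0"
  shows "c = (\<lambda>_. 0)"
proof (rule ccontr)
  define S where "S = {s. c s \<noteq> 0}"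
  have S: "finite S" "S \<subseteq> mi n \<times> mi n" using ok unfolding coeffs_ok_def S_def by auto
  assume "c \<noteq> (\<lambda>_. 0)"
  then have "S \<noteq> {}" unfolding S_def by auto
  define d where "d = Min (bideg n ` S)"
  have "d \<in> bideg n ` S" unfolding d_def using S \<open>S \<noteq> {}\<close> by (intro Min_in) auto
  then obtain s0 where s0: "s0 \<in> S" "bideg n s0 = d" by auto
  define S0 where "S0 = {s. c s \<noteq> 0 \<and> bideg n s = d}"
  have "(\<Sum>s\<in>S0. c s * wpow n w (fst s) * wbpow n w (snd s)) = 0"
    if "\<forall>i\<ge>n. w i = 0" "\<forall>i<n. cmod (w i) < 1 / real (Suc n)" for w
    unfolding S0_def
    by (rule comb_lowest_degree_part_eq_0[OF ok comb0 _ that]) (use S d_def S_def in simp)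
  then have coeff_sum: "(\<Sum>s\<in>{s\<in>S0. \<forall>i<n. fst s i = fst s0 i \<and> snd s i = snd s0 i}. c s) = 0"
    by (intro wpow_wbpow_coeff_sum_eq_0) (use S S0_def S_def in auto)
  have "{s\<in>S0. \<forall>i<n. fst s i = fst s0 i \<and> snd s i = snd s0 i} = {s0}"
  proof
    show "{s0} \<subseteq> {s\<in>S0. \<forall>i<n. fst s i = fst s0 i \<and> snd s i = snd s0 i}"
      using s0 S0_def S_def by auto
    show "{s\<in>S0. \<forall>i<n. fst s i = fst s0 i \<and> snd s i = snd s0 i} \<subseteq> {s0}"
    proof
      fix s assume s: "s \<in> {s\<in>S0. \<forall>i<n. fst s i = fst s0 i \<and> snd s i = snd s0 i}"
      then have "s \<in> mi n \<times> mi n" "s0 \<in> mi n \<times> mi n" using s0 S S0_def S_def by auto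
      then have "fst s = fst s0" "snd s = snd s0" using s by (auto intro: mi_eq)
      then show "s \<in> {s0}" by (simp add: prod_eq_iff)
    qed
  qed
  then show False using coeff_sum s0 S_def by simp
qed

lemma comb_inj:
  assumes a: "coeffs_ok n a" and b: "coeffs_ok n b" and eq: "comb n a = comb n b"
  shows "a = b"
proof -
  have "(\<lambda>x. a x + (-1) * b x) = (\<lambda>_. 0)"
  proof (rule comb_eq_0_imp_coeffs_0)
    show "coeffs_ok n (\<lambda>x. a x + (-1) * b x)" by (intro coeffs_ok_add coeffs_ok_scale a b)
    have "comb n (\<lambda>x. a x + (-1) * b x) w = comb n a w + (-1) * comb n b w" for w
      by (simp only: comb_add[OF a coeffs_ok_scale[OF b]] comb_scale[OF b])
    then show "comb n (\<lambda>x. a x + (-1) * b x) w = 0" for w using eq by simp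
  qed
  then show ?thesis by (simp add: fun_eq_iff)
qed

lemma coeff_comb: "coeffs_ok n c \<Longrightarrow> coeff n (comb n c) = c"
  unfolding coeff_def by (rule the_equality) (auto intro: comb_inj)

lemma coeff_PD: "g \<in> PD n \<Longrightarrow> coeffs_ok n (coeff n g) \<and> comb n (coeff n g) = g"
  unfolding PD_def using coeff_comb by auto

section \<open>The norms as weighted l1-norms of coefficients\<close>

definition coeff_norm :: "nat \<Rightarrow> real \<Rightarrow> ((nat \<Rightarrow> nat) \<times> (nat \<Rightarrow> nat) \<Rightarrow> complex) \<Rightarrow> real" where
  "coeff_norm n \<rho> c = (\<Sum>x\<in>{x. c x \<noteq> 0}. cmod (c x) * \<rho> ^ bideg n x)"

lemma coeff_norm_eq_sum_over:
  assumes "finite X" "{x. c x \<noteq> 0} \<subseteq> X"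
  shows "coeff_norm n \<rho> c = (\<Sum>x\<in>X. cmod (c x) * \<rho> ^ bideg n x)"
  unfolding coeff_norm_def by (rule sum.mono_neutral_left) (use assms in auto)

lemma Dnorm_eq_coeff_norm: "Dnorm n \<rho> g = coeff_norm n \<rho> (coeff n g)"
  unfolding Dnorm_def coeff_norm_def bideg_def ..

lemma Dnorm_nonneg: "0 \<le> \<rho> \<Longrightarrow> 0 \<le> Dnorm n \<rho> g"
  unfolding Dnorm_def by (intro sum_nonneg) auto

text \<open>Dnorm is junk outside PD n (coeff is defined by THE), so bounds are carried
  together with membership in PD n.\<close>

definition Dnorm_bounded :: "nat \<Rightarrow> real \<Rightarrow> ((nat \<Rightarrow> complex) \<Rightarrow> complex) \<Rightarrow> real \<Rightarrow> bool" where
  "Dnorm_bounded n \<rho> g B \<longleftrightarrow> g \<in> PD n \<and> Dnorm n \<rho> g \<le> B"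

lemma Dnorm_boundedI:
  assumes "coeffs_ok n c" "comb n c = g" "coeff_norm n \<rho> c \<le> B"
  shows "Dnorm_bounded n \<rho> g B"
proof -
  have "g \<in> PD n" unfolding PD_def using assms by blast
  moreover have "Dnorm n \<rho> g = coeff_norm n \<rho> c"
    using assms(1,2) coeff_comb Dnorm_eq_coeff_norm by metis
  ultimately show ?thesis unfolding Dnorm_bounded_def using assms(3) by simp
qed

lemma Dnorm_boundedE:
  assumes "Dnorm_bounded n \<rho> g B"
  obtains c where "coeffs_ok n c" "comb n c = g" "coeff_norm n \<rho> c \<le> B"
  using assms coeff_PD unfolding Dnorm_bounded_def Dnorm_eq_coeff_norm by blast

lemma Dnorm_bounded_mono: "Dnorm_bounded n \<rho> g B \<Longrightarrow> B \<le> B' \<Longrightarrow> Dnorm_bounded n \<rho> g B'"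
  unfolding Dnorm_bounded_def by auto

lemma Dnorm_bounded_add:
  assumes \<rho>: "0 \<le> \<rho>" and g1: "Dnorm_bounded n \<rho> g1 B1" and g2: "Dnorm_bounded n \<rho> g2 B2"
  shows "Dnorm_bounded n \<rho> (\<lambda>w. g1 w + g2 w) (B1 + B2)"
proof -
  obtain a where a: "coeffs_ok n a" "comb n a = g1" "coeff_norm n \<rho> a \<le> B1"
    using g1 by (rule Dnorm_boundedE)
  obtain b where b: "coeffs_ok n b" "comb n b = g2" "coeff_norm n \<rho> b \<le> B2"
    using g2 by (rule Dnorm_boundedE)
  let ?X = "{x. a x \<noteq> 0} \<union> {x. b x \<noteq> 0}"
  have X: "finite ?X" using a b unfolding coeffs_ok_def by simp
  show ?thesis
  proof (rule Dnorm_boundedI)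
    show "coeffs_ok n (\<lambda>x. a x + b x)" by (rule coeffs_ok_add[OF a(1) b(1)])
    show "comb n (\<lambda>x. a x + b x) = (\<lambda>w. g1 w + g2 w)"
      using comb_add[OF a(1) b(1)] a b by auto
    have "coeff_norm n \<rho> (\<lambda>x. a x + b x) = (\<Sum>x\<in>?X. cmod (a x + b x) * \<rho> ^ bideg n x)"
      by (rule coeff_norm_eq_sum_over[OF X]) auto
    also have "\<dots> \<le> (\<Sum>x\<in>?X. cmod (a x) * \<rho> ^ bideg n x + cmod (b x) * \<rho> ^ bideg n x)"
      by (intro sum_mono) (simp add: \<rho> distrib_right[symmetric] mult_right_mono norm_triangle_ineq)
    also have "\<dots> = coeff_norm n \<rho> a + coeff_norm n \<rho> b"
      by (simp add: sum.distrib coeff_norm_eq_sum_over[OF X])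
    finally show "coeff_norm n \<rho> (\<lambda>x. a x + b x) \<le> B1 + B2" using a b by simp
  qed
qed

lemma Dnorm_bounded_scale:
  assumes "Dnorm_bounded n \<rho> g B"
  shows "Dnorm_bounded n \<rho> (\<lambda>w. k * g w) (cmod k * B)"
proof -
  obtain a where a: "coeffs_ok n a" "comb n a = g" "coeff_norm n \<rho> a \<le> B"
    using assms by (rule Dnorm_boundedE)
  have X: "finite {x. a x \<noteq> 0}" using a unfolding coeffs_ok_def by simp
  show ?thesis
  proof (rule Dnorm_boundedI)
    show "coeffs_ok n (\<lambda>x. k * a x)" by (rule coeffs_ok_scale[OF a(1)])
    show "comb n (\<lambda>x. k * a x) = (\<lambda>w. k * g w)"
      using comb_scale[OF a(1)] a by auto
    have "coeff_norm n \<rho> (\<lambda>x. k * a x) = cmod k * coeff_norm n \<rho> a"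
      by (subst (1 2) coeff_norm_eq_sum_over[OF X])
         (auto simp: sum_distrib_left norm_mult mult.assoc)
    then show "coeff_norm n \<rho> (\<lambda>x. k * a x) \<le> cmod k * B"
      using a by (simp add: mult_left_mono)
  qed
qed

lemma Dnorm_bounded_zero: "Dnorm_bounded n \<rho> (\<lambda>w. 0) 0"
  by (rule Dnorm_boundedI[OF coeffs_ok_zero]) (simp_all add: comb_def coeff_norm_def)

lemma Dnorm_bounded_sum:
  assumes \<rho>: "0 \<le> \<rho>" and "finite I" and "\<And>i. i \<in> I \<Longrightarrow> Dnorm_bounded n \<rho> (g i) (B i)"
  shows "Dnorm_bounded n \<rho> (\<lambda>w. \<Sum>i\<in>I. g i w) (\<Sum>i\<in>I. B i)"
  using assms(2,3)
proof (induction I rule: finite_induct)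
  case empty
  then show ?case using Dnorm_bounded_zero by simp
next
  case (insert x F)
  then show ?case using Dnorm_bounded_add[OF \<rho>, of n "g x" "B x" "\<lambda>w. \<Sum>i\<in>F. g i w"] by simp
qed

lemma Dnorm_bounded_frPQ:
  assumes "P \<in> mi n" "Q \<in> mi n"
  shows "Dnorm_bounded n \<rho> (frPQ n P Q) (\<rho> ^ (msize n P + msize n Q))"
proof (rule Dnorm_boundedI)
  let ?c = "\<lambda>x. if x = (P, Q) then (1::complex) else 0"
  show "coeffs_ok n ?c"
    unfolding coeffs_ok_def using assms by (auto intro: finite_subset[of _ "{(P,Q)}"])
  show "comb n ?c = frPQ n P Q"
    by (rule ext, subst comb_eq_sum_over[of "{(P,Q)}"]) auto
  show "coeff_norm n \<rho> ?c \<le> \<rho> ^ (msize n P + msize n Q)"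
    by (subst coeff_norm_eq_sum_over[of "{(P,Q)}"]) (auto simp: bideg_def)
qed

lemma Dnorm_zero: "Dnorm n \<rho> (\<lambda>w. 0) = 0"
proof -
  have "coeff n (\<lambda>w. 0) = (\<lambda>x. 0)"
    using coeff_comb[OF coeffs_ok_zero, of n] by (simp add: comb_def)
  then show ?thesis unfolding Dnorm_def by simp
qed

lemma PD_diff:
  assumes "g1 \<in> PD n" "g2 \<in> PD n"
  shows "(\<lambda>w. g1 w - g2 w) \<in> PD n"
proof -
  have "Dnorm_bounded n 1 g (Dnorm n 1 g)" if "g \<in> PD n" for g
    using that unfolding Dnorm_bounded_def by simp
  then have "Dnorm_bounded n 1 (\<lambda>w. g1 w + (-1) * g2 w) (Dnorm n 1 g1 + cmod (-1) * Dnorm n 1 g2)"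
    using assms by (intro Dnorm_bounded_add Dnorm_bounded_scale) auto
  then show ?thesis unfolding Dnorm_bounded_def by simp
qed

lemma Dnorm_triangle:
  assumes "0 \<le> \<rho>" "g1 \<in> PD n" "g2 \<in> PD n"
  shows "Dnorm n \<rho> (\<lambda>w. g1 w + g2 w) \<le> Dnorm n \<rho> g1 + Dnorm n \<rho> g2"
  using Dnorm_bounded_add[of \<rho> n g1 _ g2] assms unfolding Dnorm_bounded_def by simp

section \<open>The norm of f_{P,Q}\<close>

lemma msize_incr: "i < n \<Longrightarrow> msize n (A(i := Suc (A i))) = Suc (msize n A)"
proof -
  assume i: "i < n"
  have "msize n (A(i := Suc (A i))) = (\<Sum>j<n. A j + (if j = i then 1 else 0))"
    unfolding msize_def by (rule sum.cong) auto
  also have "\<dots> = Suc (msize n A)" unfolding msize_def sum.distrib using i by simp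
  finally show ?thesis .
qed

lemma wpow_incr: "i < n \<Longrightarrow> wpow n w (A(i := Suc (A i))) = wpow n w A * w i"
proof -
  assume i: "i < n"
  have "wpow n w (A(i := Suc (A i))) = (\<Prod>j<n. w j ^ A j * (if j = i then w j else 1))"
    unfolding wpow_def by (rule prod.cong) auto
  also have "\<dots> = wpow n w A * w i" unfolding wpow_def prod.distrib using i by simp
  finally show ?thesis .
qed

lemma wbpow_incr: "i < n \<Longrightarrow> wbpow n w (A(i := Suc (A i))) = wbpow n w A * cnj (w i)"
proof -
  assume i: "i < n"
  have "wbpow n w (A(i := Suc (A i))) = (\<Prod>j<n. cnj (w j) ^ A j * (if j = i then cnj (w j) else 1))"
    unfolding wbpow_def by (rule prod.cong) auto
  also have "\<dots> = wbpow n w A * cnj (w i)" unfolding wbpow_def prod.distrib using i by simp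
  finally show ?thesis .
qed

lemma wnorm2_eq_sum: "complex_of_real (wnorm2 n w) = (\<Sum>i<n. w i * cnj (w i))"
  unfolding wnorm2_def by (simp only: of_real_sum complex_norm_square)

lemma mi_upd: "A \<in> mi n \<Longrightarrow> i < n \<Longrightarrow> A(i := v) \<in> mi n"
  unfolding mi_def by auto

text \<open>hterm n j A B = frPQ n A B * (x / (1 - x))^j with x = |w|^2; since
  x = \<Sum>i. w_i cnj(w_i), it is a sum of n^j basis functions.\<close>

definition hterm :: "nat \<Rightarrow> nat \<Rightarrow> (nat \<Rightarrow> nat) \<Rightarrow> (nat \<Rightarrow> nat) \<Rightarrow> (nat \<Rightarrow> complex) \<Rightarrow> complex" where
  "hterm n j A B w = (if w \<in> Dball n then
     of_real (wnorm2 n w) ^ j * wpow n w A * wbpow n w B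
       / (1 - of_real (wnorm2 n w)) ^ (max (msize n A) (msize n B) + j)
   else 0)"

lemma hterm_0: "hterm n 0 A B = frPQ n A B"
  by (simp add: hterm_def frPQ_def fun_eq_iff)

lemma hterm_Suc:
  "hterm n (Suc j) A B w = (\<Sum>i<n. hterm n j (A(i := Suc (A i))) (B(i := Suc (B i))) w)"
proof (cases "w \<in> Dball n")
  case True
  let ?x = "complex_of_real (wnorm2 n w)"
  let ?m = "max (msize n A) (msize n B)"
  have "hterm n (Suc j) A B w = ?x ^ j * ?x * wpow n w A * wbpow n w B / (1 - ?x) ^ (Suc ?m + j)"
    unfolding hterm_def using True by (simp add: mult_ac)
  also have "\<dots> = (\<Sum>i<n. ?x ^ j * (w i * cnj (w i)) * wpow n w A * wbpow n w B / (1 - ?x) ^ (Suc ?m + j))"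
    by (subst (2) wnorm2_eq_sum) (simp add: sum_distrib_left sum_distrib_right sum_divide_distrib)
  also have "\<dots> = (\<Sum>i<n. hterm n j (A(i := Suc (A i))) (B(i := Suc (B i))) w)"
    unfolding hterm_def using True by (intro sum.cong) (simp_all add: msize_incr wpow_incr wbpow_incr mult_ac)
  finally show ?thesis .
qed (simp add: hterm_def)

lemma Dnorm_bounded_hterm:
  assumes \<rho>: "0 \<le> \<rho>"
  shows "A \<in> mi n \<Longrightarrow> B \<in> mi n \<Longrightarrow>
    Dnorm_bounded n \<rho> (hterm n j A B) (real n ^ j * \<rho> ^ (msize n A + msize n B + 2 * j))"
proof (induction j arbitrary: A B)
  case 0
  then show ?case using Dnorm_bounded_frPQ by (simp add: hterm_0)
next
  case (Suc j)
  have split: "hterm n (Suc j) A B = (\<lambda>w. \<Sum>i<n. hterm n j (A(i := Suc (A i))) (B(i := Suc (B i))) w)"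
    by (rule ext) (rule hterm_Suc)
  have "Dnorm_bounded n \<rho> (\<lambda>w. \<Sum>i<n. hterm n j (A(i := Suc (A i))) (B(i := Suc (B i))) w)
     (\<Sum>i<n. real n ^ j * \<rho> ^ (msize n (A(i := Suc (A i))) + msize n (B(i := Suc (B i))) + 2 * j))"
    by (rule Dnorm_bounded_sum[OF \<rho>]) (use Suc in \<open>auto intro!: Suc.IH mi_upd\<close>)
  also have "(\<Sum>i<n. real n ^ j * \<rho> ^ (msize n (A(i := Suc (A i))) + msize n (B(i := Suc (B i))) + 2 * j))
     = real n ^ Suc j * \<rho> ^ (msize n A + msize n B + 2 * Suc j)"
    by (simp add: msize_incr)
  finally show ?case unfolding split .
qed

lemma inverse_power_binomial_expansion:
  fixes y :: "'a::field"
  assumes "y \<noteq> 0"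
  shows "1 / y ^ (m + k) = (\<Sum>j\<le>k. of_nat (k choose j) * (1 - y) ^ j / y ^ (m + j))"
proof -
  have "(\<Sum>j\<le>k. of_nat (k choose j) * (1 - y) ^ j / y ^ (m + j)) * y ^ (m + k)
      = (\<Sum>j\<le>k. of_nat (k choose j) * (1 - y) ^ j * y ^ (k - j))"
    unfolding sum_distrib_right
  proof (rule sum.cong[OF refl])
    fix j assume "j \<in> {..k}"
    then have "y ^ (m + k) = y ^ (m + j) * y ^ (k - j)" by (simp flip: power_add)
    then show "of_nat (k choose j) * (1 - y) ^ j / y ^ (m + j) * y ^ (m + k) =
        of_nat (k choose j) * (1 - y) ^ j * y ^ (k - j)"
      using assms by simp
  qed
  also have "\<dots> = 1" using binomial_ring[of "1 - y" y k] by simp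
  finally show ?thesis using assms by (simp add: field_simps)
qed

lemma msize_Suc: "msize (Suc n) P = P 0 + msize n (mtail P)"
  unfolding msize_def mtail_def by (simp only: sum.lessThan_Suc_shift)

lemma mtail_mi: "P \<in> mi (Suc n) \<Longrightarrow> mtail P \<in> mi n"
  unfolding mi_def mtail_def by auto

lemma fPQ_eq_sum_hterm:
  assumes "msize (Suc n) P = msize (Suc n) Q"
  defines "k \<equiv> msize (Suc n) P - max (msize n (mtail P)) (msize n (mtail Q))"
  shows "fPQ n P Q w = (\<Sum>j\<le>k. of_nat (k choose j) * hterm n j (mtail P) (mtail Q) w)"
proof (cases "w \<in> Dball n")
  case True
  let ?x = "complex_of_real (wnorm2 n w)"
  let ?m = "max (msize n (mtail P)) (msize n (mtail Q))"
  have m: "msize (Suc n) P = ?m + k" unfolding k_def using assms(1) by (simp add: msize_Suc)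
  have "wnorm2 n w < 1" using True unfolding Dball_def by simp
  then have "1 - ?x \<noteq> 0" by (metis eq_iff_diff_eq_0 of_real_eq_1_iff less_irrefl)
  have "fPQ n P Q w = wpow n w (mtail P) * wbpow n w (mtail Q) * (1 / (1 - ?x) ^ (?m + k))"
    unfolding fPQ_def using True m by simp
  also have "\<dots> = wpow n w (mtail P) * wbpow n w (mtail Q)
      * (\<Sum>j\<le>k. of_nat (k choose j) * (1 - (1 - ?x)) ^ j / (1 - ?x) ^ (?m + j))"
    by (simp only: inverse_power_binomial_expansion[OF \<open>1 - ?x \<noteq> 0\<close>])
  also have "\<dots> = (\<Sum>j\<le>k. of_nat (k choose j) * hterm n j (mtail P) (mtail Q) w)"
    unfolding sum_distrib_left
    by (rule sum.cong[OF refl]) (simp add: hterm_def True mult_ac add.commute)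
  finally show ?thesis .
qed (simp add: fPQ_def hterm_def)

lemma binomial_weight_bound:
  fixes \<rho> :: real
  assumes "0 \<le> \<rho>" "a \<le> m0" "b \<le> m0" "m0 + k = m"
  shows "(\<Sum>j\<le>k. real (k choose j) * (real n ^ j * \<rho> ^ (a + b + 2 * j)))
    \<le> (max 1 \<rho> ^ 2 * real (Suc n)) ^ m"
proof -
  have "(\<Sum>j\<le>k. real (k choose j) * (real n ^ j * \<rho> ^ (a + b + 2 * j)))
      \<le> (\<Sum>j\<le>k. real (k choose j) * (real n ^ j * max 1 \<rho> ^ (2 * m)))"
  proof (intro sum_mono mult_left_mono)
    fix j assume "j \<in> {..k}"
    then have "a + b + 2 * j \<le> 2 * m" using assms by auto
    then have "max 1 \<rho> ^ (a + b + 2 * j) \<le> max 1 \<rho> ^ (2 * m)"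
      by (intro power_increasing) auto
    moreover have "\<rho> ^ (a + b + 2 * j) \<le> max 1 \<rho> ^ (a + b + 2 * j)"
      using assms(1) by (intro power_mono) auto
    ultimately show "\<rho> ^ (a + b + 2 * j) \<le> max 1 \<rho> ^ (2 * m)" by linarith
  qed auto
  also have "\<dots> = (\<Sum>j\<le>k. real (k choose j) * real n ^ j * 1 ^ (k - j)) * max 1 \<rho> ^ (2 * m)"
    unfolding sum_distrib_right by (rule sum.cong) (simp_all add: mult_ac)
  also have "\<dots> = (real n + 1) ^ k * max 1 \<rho> ^ (2 * m)"
    by (simp only: binomial_ring[symmetric])
  also have "\<dots> \<le> (real n + 1) ^ m * max 1 \<rho> ^ (2 * m)"
    using assms by (intro mult_right_mono power_increasing) auto
  also have "\<dots> = (max 1 \<rho> ^ 2 * real (Suc n)) ^ m"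
    by (simp add: power_mult_distrib mult_ac flip: power_mult) (simp add: add.commute)
  finally show ?thesis .
qed

lemma Dnorm_bounded_fPQ:
  assumes \<rho>: "0 \<le> \<rho>" and P: "P \<in> mi (Suc n)" and Q: "Q \<in> mi (Suc n)"
    and PQ: "msize (Suc n) P = msize (Suc n) Q"
  shows "Dnorm_bounded n \<rho> (fPQ n P Q) ((max 1 \<rho> ^ 2 * real (Suc n)) ^ msize (Suc n) P)"
proof -
  define m0 where "m0 = max (msize n (mtail P)) (msize n (mtail Q))"
  define k where "k = msize (Suc n) P - m0"
  have "m0 + k = msize (Suc n) P" unfolding k_def m0_def using PQ by (simp add: msize_Suc)
  have bounded: "Dnorm_bounded n \<rho> (\<lambda>w. \<Sum>j\<le>k. of_nat (k choose j) * hterm n j (mtail P) (mtail Q) w)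
      (\<Sum>j\<le>k. cmod (of_nat (k choose j) :: complex)
        * (real n ^ j * \<rho> ^ (msize n (mtail P) + msize n (mtail Q) + 2 * j)))"
    using P Q by (intro Dnorm_bounded_sum \<rho> Dnorm_bounded_scale Dnorm_bounded_hterm mtail_mi) auto
  have expand: "(\<lambda>w. \<Sum>j\<le>k. of_nat (k choose j) * hterm n j (mtail P) (mtail Q) w) = fPQ n P Q"
    using fPQ_eq_sum_hterm[OF PQ] unfolding k_def m0_def by auto
  have "(\<Sum>j\<le>k. cmod (of_nat (k choose j) :: complex)
        * (real n ^ j * \<rho> ^ (msize n (mtail P) + msize n (mtail Q) + 2 * j)))
      \<le> (max 1 \<rho> ^ 2 * real (Suc n)) ^ msize (Suc n) P"
    using binomial_weight_bound[OF \<rho> _ _ \<open>m0 + k = msize (Suc n) P\<close>] by (simp add: m0_def)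
  with bounded show ?thesis unfolding expand by (rule Dnorm_bounded_mono)
qed

section \<open>Structure constants of the star product\<close>

lemma norm_pochhammer_le:
  fixes c :: "'a::real_normed_field"
  shows "norm (pochhammer c k) \<le> (norm c + 1) ^ k * fact k"
proof (induction k)
  case (Suc k)
  have "norm (c + of_nat k) \<le> norm c + real k" by (metis norm_of_nat norm_triangle_ineq)
  also have "\<dots> \<le> (norm c + 1) * (real k + 1)" by (simp add: algebra_simps)
  finally have factor: "norm (c + of_nat k) \<le> (norm c + 1) * (real k + 1)" .
  have "norm (pochhammer c (Suc k)) = norm (pochhammer c k) * norm (c + of_nat k)"
    by (simp add: pochhammer_Suc norm_mult)
  also have "\<dots> \<le> ((norm c + 1) ^ k * fact k) * ((norm c + 1) * (real k + 1))"
    by (intro mult_mono Suc factor) auto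
  also have "\<dots> = (norm c + 1) ^ Suc k * fact (Suc k)"
    by (simp add: algebra_simps)
  finally show ?case .
qed simp

lemma norm_pochhammer_ge:
  fixes c :: "'a::real_normed_field"
  assumes "0 \<le> \<delta>" "\<And>j. \<delta> * (real j + 1) \<le> norm (c + of_nat j)"
  shows "\<delta> ^ k * fact k \<le> norm (pochhammer c k)"
proof (induction k)
  case (Suc k)
  have "\<delta> ^ Suc k * fact (Suc k) = (\<delta> ^ k * fact k) * (\<delta> * (real k + 1))"
    by (simp add: algebra_simps)
  also have "\<dots> \<le> norm (pochhammer c k) * norm (c + of_nat k)"
    by (intro mult_mono Suc assms(2)) (use assms(1) in auto)
  finally show ?case by (simp add: pochhammer_Suc norm_mult)
qed simp

text \<open>Beyond j = 2|c| the factor c + j has norm at least (j + 1)/2; the finitely many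
  earlier factors are bounded away from 0.\<close>

lemma pochhammer_factorial_lower_bound:
  fixes c :: "'a::real_normed_field"
  assumes nonzero: "\<And>j. c + of_nat j \<noteq> 0"
  obtains \<delta> where "0 < \<delta>" "\<delta> \<le> 1" "\<And>k. \<delta> ^ k * fact k \<le> norm (pochhammer c k)"
proof -
  define J where "J = nat \<lceil>2 * norm c\<rceil> + 1"
  define \<delta> where "\<delta> = Min (insert (1/2) ((\<lambda>j. norm (c + of_nat j) / (real j + 1)) ` {..<J}))"
  have pos: "0 < \<delta>" unfolding \<delta>_def using nonzero by simp
  have le: "\<delta> \<le> 1/2" unfolding \<delta>_def by (rule Min_le) auto
  have "\<delta> * (real j + 1) \<le> norm (c + of_nat j)" for j
  proof (cases "j < J")
    case True
    then have "\<delta> \<le> norm (c + of_nat j) / (real j + 1)" unfolding \<delta>_def by simp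
    then show ?thesis by (simp add: field_simps)
  next
    case False
    then have "real j \<ge> 2 * norm c + 1" unfolding J_def by linarith
    moreover have "real j - norm c \<le> norm (c + of_nat j)"
      using norm_diff_ineq[of "of_nat j" c] by (simp add: add.commute)
    ultimately have "(real j + 1) / 2 \<le> norm (c + of_nat j)" by (simp add: field_simps)
    moreover have "\<delta> * (real j + 1) \<le> (real j + 1) / 2" using le by simp
    ultimately show ?thesis by linarith
  qed
  then show ?thesis using pos le that norm_pochhammer_ge[of \<delta> c] by simp
qed

lemma Hset_pochhammer_factor_nonzero:
  assumes "h \<in> Hset"
  shows "1 / (2 * h) + of_nat j \<noteq> 0"
proof
  assume sum0: "1 / (2 * h) + of_nat j = 0"
  have "h \<noteq> 0" using assms unfolding Hset_def by auto
  show False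
  proof (cases "j = 0")
    case True
    then show False using sum0 \<open>h \<noteq> 0\<close> by simp
  next
    case False
    from sum0 have j: "1 / (2 * h) = - of_nat j" by (simp add: eq_neg_iff_add_eq_0)
    have "h = 1 / (2 * (1 / (2 * h)))" using \<open>h \<noteq> 0\<close> by simp
    also have "\<dots> = - 1 / (2 * of_nat j)" unfolding j by simp
    finally have "h = - 1 / (2 * of_nat j)" .
    then show False using assms False unfolding Hset_def by auto
  qed
qed

lemma fact_mult_le_fact_add: "fact a * fact b \<le> (fact (a + b) :: nat)"
  by (rule dvd_imp_le) (auto intro: fact_fact_dvd_fact)

lemma prod_fact_le_fact_sum:
  fixes T :: "nat \<Rightarrow> nat"
  shows "(\<Prod>i<N. fact (T i)) \<le> (fact (\<Sum>i<N. T i) :: nat)"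
proof (induction N)
  case (Suc N)
  have "(\<Prod>i<N. fact (T i)) * fact (T N) \<le> fact (\<Sum>i<N. T i) * (fact (T N) :: nat)"
    using Suc by (rule mult_right_mono) simp
  also have "\<dots> \<le> fact ((\<Sum>i<N. T i) + T N)" by (rule fact_mult_le_fact_add)
  finally show ?case by simp
qed simp

lemma mbinom_le: "mbinom N P T \<le> 2 ^ msize N P"
proof -
  have "mbinom N P T \<le> (\<Prod>i<N. 2 ^ P i)" unfolding mbinom_def
    by (rule prod_mono) (simp add: binomial_le_pow2)
  also have "\<dots> = 2 ^ msize N P" unfolding msize_def by (simp add: power_sum)
  finally show ?thesis .
qed

lemma fact_mult_fact_diff_le:
  assumes "t \<le> p" "t \<le> s"
  shows "fact t * fact (p + s - t) \<le> (2::nat) ^ (p + s) * fact p * fact s"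
proof -
  define u where "u = p - t"
  have p: "p = t + u" and ps: "p + s - t = s + u" using assms unfolding u_def by auto
  have "fact (s + u) = ((s + u) choose u) * fact u * (fact s :: nat)"
    using binomial_fact_lemma[of u "s + u"] by (simp add: mult_ac)
  also have "\<dots> \<le> 2 ^ (s + u) * fact u * fact s"
    by (intro mult_right_mono binomial_le_pow2) auto
  finally have "fact t * fact (s + u) \<le> 2 ^ (s + u) * (fact t * fact u) * (fact s :: nat)"
    by (simp add: mult_ac)
  also have "\<dots> \<le> 2 ^ (s + u) * fact (t + u) * fact s"
    by (intro mult_right_mono mult_left_mono fact_mult_le_fact_add) auto
  also have "\<dots> \<le> 2 ^ (p + s) * fact (t + u) * fact s"
    by (intro mult_right_mono power_increasing) (auto simp: p)
  finally show ?thesis by (simp add: p ps add_ac)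
qed

lemma finite_card_below_multi_index:
  fixes P :: "nat \<Rightarrow> nat"
  shows "finite {T\<in>mi N. \<forall>i. T i \<le> min (P i) (S i)}"
    "card {T\<in>mi N. \<forall>i. T i \<le> min (P i) (S i)} \<le> 2 ^ msize N P"
proof -
  define f where "f g = (\<lambda>i. if i < N then g i else (0::nat))" for g :: "nat \<Rightarrow> nat"
  define E where "E = PiE {..<N} (\<lambda>i. {..P i})"
  have sub: "{T\<in>mi N. \<forall>i. T i \<le> min (P i) (S i)} \<subseteq> f ` E"
  proof
    fix T assume T: "T \<in> {T\<in>mi N. \<forall>i. T i \<le> min (P i) (S i)}"
    have "T = f (restrict T {..<N})"
      using T unfolding f_def mi_def by (auto simp: fun_eq_iff)
    moreover have "restrict T {..<N} \<in> E" unfolding E_def using T by auto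
    ultimately show "T \<in> f ` E" by blast
  qed
  have E: "finite E" unfolding E_def by (intro finite_PiE) auto
  then show "finite {T\<in>mi N. \<forall>i. T i \<le> min (P i) (S i)}" using sub finite_subset by blast
  have "card (f ` E) \<le> card E" using E by (rule card_image_le)
  also have "card E = (\<Prod>i<N. Suc (P i))" unfolding E_def by (simp add: card_PiE)
  also have "\<dots> \<le> (\<Prod>i<N. 2 ^ P i)" by (rule prod_mono) (simp add: Suc_le_eq)
  also have "\<dots> = 2 ^ msize N P" unfolding msize_def by (simp add: power_sum)
  finally have "card (f ` E) \<le> 2 ^ msize N P" .
  moreover have "card {T\<in>mi N. \<forall>i. T i \<le> min (P i) (S i)} \<le> card (f ` E)"
    using sub E by (intro card_mono) auto
  ultimately show "card {T\<in>mi N. \<forall>i. T i \<le> min (P i) (S i)} \<le> 2 ^ msize N P" by linarith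
qed

lemma msize_le: "(\<And>i. T i \<le> P i) \<Longrightarrow> msize N T \<le> msize N P"
  unfolding msize_def by (rule sum_mono) auto

lemma msize_add_diff:
  assumes "\<And>i. T i \<le> P i"
  shows "msize N (\<lambda>i. P i + R i - T i) = msize N P + msize N R - msize N T"
proof -
  have "msize N (\<lambda>i. P i + R i - T i) = (\<Sum>i<N. P i + R i) - msize N T"
    unfolding msize_def by (rule sum_subtractf_nat) (use assms in \<open>simp add: trans_le_add1\<close>)
  then show ?thesis unfolding msize_def by (simp add: sum.distrib)
qed

definition star_coeff :: "nat \<Rightarrow> complex \<Rightarrow> (nat \<Rightarrow> nat) \<Rightarrow> (nat \<Rightarrow> nat) \<Rightarrow> (nat \<Rightarrow> nat) \<Rightarrow> complex" where
  "star_coeff n c P S T = (-1) ^ T 0 * pochhammer c (msize (Suc n) (\<lambda>i. P i + S i - T i))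
       * of_nat (mfact (Suc n) T)
       / (pochhammer c (msize (Suc n) P) * pochhammer c (msize (Suc n) S))
       * of_nat (mbinom (Suc n) P T) * of_nat (mbinom (Suc n) S T)"

lemma starf_eq_sum_star_coeff:
  "starf n h P Q R S = (\<lambda>w. \<Sum>T\<in>{T\<in>mi (Suc n). \<forall>i. T i \<le> min (P i) (S i)}.
     star_coeff n (1 / (2 * h)) P S T * fPQ n (\<lambda>i. P i + R i - T i) (\<lambda>i. Q i + S i - T i) w)"
  unfolding starf_def star_coeff_def ..

text \<open>With t = |T| \<le> min p s: the Pochhammer symbol contributes at most C^(p+s) (p+s-t)!,
  and t! (p+s-t)! \<le> 2^(p+s) p! s!.\<close>

lemma starf_coeff_numerator_bound:
  fixes c :: complex and n :: nat
  assumes T: "\<forall>i. T i \<le> min (P i) (S i)"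
  defines "p \<equiv> msize (Suc n) P" and "s \<equiv> msize (Suc n) S"
  shows "cmod (pochhammer c (msize (Suc n) (\<lambda>i. P i + S i - T i))) * real (mfact (Suc n) T)
      * real (mbinom (Suc n) P T) * real (mbinom (Suc n) S T)
    \<le> (4 * (cmod c + 1)) ^ (p + s) * (fact p * fact s)"
proof -
  define t where "t = msize (Suc n) T"
  define C where "C = cmod c + 1"
  have C: "C \<ge> 1" unfolding C_def by simp
  have tp: "t \<le> p" unfolding t_def p_def by (rule msize_le) (use T in auto)
  have ts: "t \<le> s" unfolding t_def s_def by (rule msize_le) (use T in auto)
  have "msize (Suc n) (\<lambda>i. P i + S i - T i) = p + s - t"
    unfolding p_def s_def t_def by (rule msize_add_diff) (use T in auto)
  moreover have "cmod (pochhammer c (p + s - t)) \<le> C ^ (p + s) * fact (p + s - t)"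
  proof -
    have "cmod (pochhammer c (p + s - t)) \<le> C ^ (p + s - t) * fact (p + s - t)"
      unfolding C_def by (rule norm_pochhammer_le)
    also have "\<dots> \<le> C ^ (p + s) * fact (p + s - t)"
      by (intro mult_right_mono power_increasing C) auto
    finally show ?thesis .
  qed
  moreover have "real (mfact (Suc n) T) \<le> fact t"
    unfolding mfact_def t_def msize_def using prod_fact_le_fact_sum[of T "Suc n"]
    by (metis of_nat_fact of_nat_le_iff of_nat_prod)
  moreover have "real (mbinom (Suc n) P T) \<le> 2 ^ p" "real (mbinom (Suc n) S T) \<le> 2 ^ s"
    unfolding p_def s_def using mbinom_le[of "Suc n" _ T]
    by (metis of_nat_le_iff of_nat_numeral of_nat_power)+
  ultimately have "cmod (pochhammer c (msize (Suc n) (\<lambda>i. P i + S i - T i))) * real (mfact (Suc n) T)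
      * real (mbinom (Suc n) P T) * real (mbinom (Suc n) S T)
      \<le> (C ^ (p + s) * fact (p + s - t)) * fact t * 2 ^ p * 2 ^ s"
    by (intro mult_mono) (use C in auto)
  also have "\<dots> = C ^ (p + s) * (fact t * fact (p + s - t)) * 2 ^ (p + s)"
    by (simp add: power_add mult_ac)
  also have "\<dots> \<le> C ^ (p + s) * (2 ^ (p + s) * fact p * fact s) * 2 ^ (p + s)"
  proof -
    have "real (fact t * fact (p + s - t)) \<le> real (2 ^ (p + s) * fact p * fact s)"
      using fact_mult_fact_diff_le[OF tp ts] by (simp only: of_nat_le_iff)
    then show ?thesis by (intro mult_right_mono mult_left_mono) (use C in auto)
  qed
  also have "\<dots> = (2 * 2 * C) ^ (p + s) * (fact p * fact s)"
    unfolding power_mult_distrib by (simp only: mult_ac)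
  finally show ?thesis unfolding C_def by simp
qed

lemma norm_star_coeff_le:
  fixes c :: complex
  assumes T: "\<forall>i. T i \<le> min (P i) (S i)"
    and \<delta>: "0 < \<delta>" "\<And>k. \<delta> ^ k * fact k \<le> cmod (pochhammer c k)"
  shows "cmod (star_coeff n c P S T)
     \<le> (4 * (cmod c + 1) / \<delta>) ^ (msize (Suc n) P + msize (Suc n) S)"
proof -
  define p where "p = msize (Suc n) P"
  define s where "s = msize (Suc n) S"
  define num where "num = cmod (pochhammer c (msize (Suc n) (\<lambda>i. P i + S i - T i)))
      * real (mfact (Suc n) T) * real (mbinom (Suc n) P T) * real (mbinom (Suc n) S T)"
  define den where "den = cmod (pochhammer c p) * cmod (pochhammer c s)"
  have num: "num \<le> (4 * (cmod c + 1)) ^ (p + s) * (fact p * fact s)"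
    unfolding num_def p_def s_def by (rule starf_coeff_numerator_bound[OF T])
  have "\<delta> ^ (p + s) * (fact p * fact s) = (\<delta> ^ p * fact p) * (\<delta> ^ s * fact s)"
    by (simp add: power_add mult_ac)
  also have "\<dots> \<le> den" unfolding den_def
    by (intro mult_mono \<delta>(2)) (use \<delta>(1) in auto)
  finally have den: "\<delta> ^ (p + s) * (fact p * fact s) \<le> den" .
  have "cmod (star_coeff n c P S T) = num / den"
    unfolding star_coeff_def num_def den_def p_def s_def by (simp add: norm_mult norm_divide norm_power)
  also have "\<dots> \<le> ((4 * (cmod c + 1)) ^ (p + s) * (fact p * fact s)) / (\<delta> ^ (p + s) * (fact p * fact s))"
    by (rule frac_le) (use num den \<delta>(1) in \<open>simp_all add: add_nonneg_nonneg\<close>)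
  also have "\<dots> = (4 * (cmod c + 1) / \<delta>) ^ (p + s)"
    by (simp add: power_divide)
  finally show ?thesis unfolding p_def s_def .
qed

definition star_radius :: "nat \<Rightarrow> complex \<Rightarrow> real \<Rightarrow> real \<Rightarrow> real" where
  "star_radius n h \<delta> \<rho> = 2 * (4 * (cmod (1 / (2 * h)) + 1) / \<delta>) * (max 1 \<rho> ^ 2 * real (Suc n))"

lemma star_radius_factors_ge_1:
  assumes "0 < \<delta>" "\<delta> \<le> 1"
  shows "1 \<le> 4 * (cmod (1 / (2 * h)) + 1) / \<delta>" "1 \<le> max 1 \<rho> ^ 2 * real (Suc n)"
proof -
  have "1 \<le> 4 * (cmod (1 / (2 * h)) + 1)" by simp
  then have "\<delta> \<le> 4 * (cmod (1 / (2 * h)) + 1)" using assms(2) by linarith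
  then show "1 \<le> 4 * (cmod (1 / (2 * h)) + 1) / \<delta>" using assms(1) by simp
  show "1 \<le> max 1 \<rho> ^ 2 * real (Suc n)"
    by (rule mult_ge1_I) (auto simp: one_le_power)
qed

lemma star_radius_ge_1: "0 < \<delta> \<Longrightarrow> \<delta> \<le> 1 \<Longrightarrow> 1 \<le> star_radius n h \<delta> \<rho>"
  unfolding star_radius_def using star_radius_factors_ge_1 by (intro mult_ge1_I) auto

lemma Dnorm_bounded_starf_term:
  fixes h :: complex
  assumes \<rho>: "0 \<le> \<rho>" and \<delta>: "0 < \<delta>" "\<delta> \<le> 1"
    and poch: "\<And>k. \<delta> ^ k * fact k \<le> cmod (pochhammer (1 / (2 * h)) k)"
    and P: "P \<in> mi (Suc n)" and Q: "Q \<in> mi (Suc n)" and R: "R \<in> mi (Suc n)" and S: "S \<in> mi (Suc n)"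
    and PQ: "msize (Suc n) P = msize (Suc n) Q" and RS: "msize (Suc n) R = msize (Suc n) S"
    and T: "\<forall>i. T i \<le> min (P i) (S i)"
  defines "D \<equiv> 4 * (cmod (1 / (2 * h)) + 1) / \<delta>" and "K \<equiv> max 1 \<rho> ^ 2 * real (Suc n)"
    and "p \<equiv> msize (Suc n) P" and "s \<equiv> msize (Suc n) S"
  shows "Dnorm_bounded n \<rho> (\<lambda>w. star_coeff n (1 / (2 * h)) P S T
      * fPQ n (\<lambda>i. P i + R i - T i) (\<lambda>i. Q i + S i - T i) w) (D ^ (p + s) * K ^ (p + s))"
proof -
  have D: "1 \<le> D" and K: "1 \<le> K"
    unfolding D_def K_def using star_radius_factors_ge_1[OF \<delta>] by auto
  have PRT: "(\<lambda>i. P i + R i - T i) \<in> mi (Suc n)" and QST: "(\<lambda>i. Q i + S i - T i) \<in> mi (Suc n)"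
    using P Q R S unfolding mi_def by auto
  have size_PRT: "msize (Suc n) (\<lambda>i. P i + R i - T i) = p + s - msize (Suc n) T"
    using msize_add_diff[of T P "Suc n" R] T RS unfolding p_def s_def by simp
  have "msize (Suc n) (\<lambda>i. S i + Q i - T i) = s + p - msize (Suc n) T"
    using msize_add_diff[of T S "Suc n" Q] T PQ unfolding p_def s_def by simp
  then have size_QST: "msize (Suc n) (\<lambda>i. Q i + S i - T i) = p + s - msize (Suc n) T"
    by (simp add: add.commute)
  have "Dnorm_bounded n \<rho> (fPQ n (\<lambda>i. P i + R i - T i) (\<lambda>i. Q i + S i - T i))
      (K ^ (p + s - msize (Suc n) T))"
    using Dnorm_bounded_fPQ[OF \<rho> PRT QST] size_PRT size_QST unfolding K_def by simp
  then have "Dnorm_bounded n \<rho> (\<lambda>w. star_coeff n (1 / (2 * h)) P S T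
      * fPQ n (\<lambda>i. P i + R i - T i) (\<lambda>i. Q i + S i - T i) w)
      (cmod (star_coeff n (1 / (2 * h)) P S T) * K ^ (p + s - msize (Suc n) T))"
    by (rule Dnorm_bounded_scale)
  moreover have "cmod (star_coeff n (1 / (2 * h)) P S T) * K ^ (p + s - msize (Suc n) T)
      \<le> D ^ (p + s) * K ^ (p + s)"
  proof (rule mult_mono)
    show "cmod (star_coeff n (1 / (2 * h)) P S T) \<le> D ^ (p + s)"
      unfolding D_def p_def s_def by (rule norm_star_coeff_le[OF T \<delta>(1) poch])
    show "K ^ (p + s - msize (Suc n) T) \<le> K ^ (p + s)" by (rule power_increasing) (use K in auto)
  qed (use D K in auto)
  ultimately show ?thesis by (rule Dnorm_bounded_mono)
qed

lemma Dnorm_bounded_starf: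
  fixes h :: complex
  assumes \<rho>: "0 \<le> \<rho>" and \<delta>: "0 < \<delta>" "\<delta> \<le> 1"
    and poch: "\<And>k. \<delta> ^ k * fact k \<le> cmod (pochhammer (1 / (2 * h)) k)"
    and P: "P \<in> mi (Suc n)" and Q: "Q \<in> mi (Suc n)" and R: "R \<in> mi (Suc n)" and S: "S \<in> mi (Suc n)"
    and PQ: "msize (Suc n) P = msize (Suc n) Q" and RS: "msize (Suc n) R = msize (Suc n) S"
  shows "Dnorm_bounded n \<rho> (starf n h P Q R S) (star_radius n h \<delta> \<rho> ^ (msize (Suc n) P + msize (Suc n) S))"
proof -
  define Ts where "Ts = {T\<in>mi (Suc n). \<forall>i. T i \<le> min (P i) (S i)}"
  define D where "D = 4 * (cmod (1 / (2 * h)) + 1) / \<delta>"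
  define K where "K = max 1 \<rho> ^ 2 * real (Suc n)"
  define p where "p = msize (Suc n) P"
  define s where "s = msize (Suc n) S"
  have D: "1 \<le> D" and K: "1 \<le> K"
    unfolding D_def K_def using star_radius_factors_ge_1[OF \<delta>] by auto
  have "finite Ts" unfolding Ts_def by (rule finite_card_below_multi_index)
  moreover have "Dnorm_bounded n \<rho> (\<lambda>w. star_coeff n (1 / (2 * h)) P S T
      * fPQ n (\<lambda>i. P i + R i - T i) (\<lambda>i. Q i + S i - T i) w) (D ^ (p + s) * K ^ (p + s))"
    if "T \<in> Ts" for T
    using Dnorm_bounded_starf_term[OF \<rho> \<delta> poch P Q R S PQ RS] that
    unfolding Ts_def D_def K_def p_def s_def by blast
  ultimately have "Dnorm_bounded n \<rho> (starf n h P Q R S) (\<Sum>T\<in>Ts. D ^ (p + s) * K ^ (p + s))"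
    unfolding starf_eq_sum_star_coeff Ts_def[symmetric] by (rule Dnorm_bounded_sum[OF \<rho>])
  moreover have "(\<Sum>T\<in>Ts. D ^ (p + s) * K ^ (p + s)) \<le> star_radius n h \<delta> \<rho> ^ (p + s)"
  proof -
    have "card Ts \<le> 2 ^ p"
      using finite_card_below_multi_index(2)[of "Suc n" P S] unfolding Ts_def p_def .
    then have "real (card Ts) \<le> 2 ^ p" by (simp add: of_nat_le_iff[symmetric])
    also have "\<dots> \<le> 2 ^ (p + s)" by (rule power_increasing) auto
    finally have "real (card Ts) * (D ^ (p + s) * K ^ (p + s)) \<le> 2 ^ (p + s) * (D ^ (p + s) * K ^ (p + s))"
      by (rule mult_right_mono) (use D K in auto)
    then show ?thesis
      unfolding star_radius_def D_def[symmetric] K_def[symmetric] by (simp add: power_mult_distrib)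
  qed
  ultimately show ?thesis unfolding p_def s_def by (rule Dnorm_bounded_mono)
qed

lemma mtail_lift: "mtail (lift n m P) = P"
  unfolding mtail_def lift_def by simp

lemma lift_mi: "P \<in> mi n \<Longrightarrow> lift n m P \<in> mi (Suc n)"
  unfolding mi_def lift_def by auto

lemma msize_lift: "msize n P \<le> m \<Longrightarrow> msize (Suc n) (lift n m P) = m"
  unfolding msize_Suc mtail_lift by (simp add: lift_def)

lemma liftL_liftR:
  assumes "x \<in> mi n \<times> mi n"
  shows "liftL n x \<in> mi (Suc n)" "liftR n x \<in> mi (Suc n)"
    "msize (Suc n) (liftL n x) = maxdeg n x" "msize (Suc n) (liftR n x) = maxdeg n x"
  using assms unfolding liftL_def liftR_def maxdeg_def
  by (auto intro!: lift_mi msize_lift)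

lemma coeff_finite: "g \<in> PD n \<Longrightarrow> finite {x. coeff n g x \<noteq> 0}"
  using coeff_PD unfolding coeffs_ok_def by blast

lemma coeff_mi: "g \<in> PD n \<Longrightarrow> coeff n g x \<noteq> 0 \<Longrightarrow> x \<in> mi n \<times> mi n"
  using coeff_PD unfolding coeffs_ok_def by blast

lemma star_eq_sum_over:
  assumes "finite X" "{x. coeff n g1 x \<noteq> 0} \<subseteq> X" "finite Y" "{y. coeff n g2 y \<noteq> 0} \<subseteq> Y"
  shows "star n h g1 g2 w = (\<Sum>x\<in>X. \<Sum>y\<in>Y. coeff n g1 x * coeff n g2 y
      * starf n h (liftL n x) (liftR n x) (liftL n y) (liftR n y) w)"
proof -
  have "star n h g1 g2 w = (\<Sum>x\<in>{x. coeff n g1 x \<noteq> 0}. \<Sum>y\<in>Y. coeff n g1 x * coeff n g2 y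
      * starf n h (liftL n x) (liftR n x) (liftL n y) (liftR n y) w)"
    unfolding star_def by (rule sum.cong[OF refl], rule sum.mono_neutral_left) (use assms in auto)
  also have "\<dots> = (\<Sum>x\<in>X. \<Sum>y\<in>Y. coeff n g1 x * coeff n g2 y
      * starf n h (liftL n x) (liftR n x) (liftL n y) (liftR n y) w)"
    by (rule sum.mono_neutral_left) (use assms in auto)
  finally show ?thesis .
qed

lemma Dnorm_bounded_star:
  fixes h :: complex
  assumes \<rho>: "0 \<le> \<rho>" and \<delta>: "0 < \<delta>" "\<delta> \<le> 1"
    and poch: "\<And>k. \<delta> ^ k * fact k \<le> cmod (pochhammer (1 / (2 * h)) k)"
    and g1: "g1 \<in> PD n" and g2: "g2 \<in> PD n"
  shows "Dnorm_bounded n \<rho> (star n h g1 g2)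
    (Dnorm n (star_radius n h \<delta> \<rho>) g1 * Dnorm n (star_radius n h \<delta> \<rho>) g2)"
proof -
  define L where "L = star_radius n h \<delta> \<rho>"
  define X where "X = {x. coeff n g1 x \<noteq> 0}"
  define Y where "Y = {y. coeff n g2 y \<noteq> 0}"
  have L: "1 \<le> L" unfolding L_def using \<delta> by (rule star_radius_ge_1)
  have X: "finite X" and Y: "finite Y" unfolding X_def Y_def using coeff_finite g1 g2 by auto
  have bounded: "Dnorm_bounded n \<rho> (\<lambda>w. \<Sum>x\<in>X. \<Sum>y\<in>Y. (coeff n g1 x * coeff n g2 y)
        * starf n h (liftL n x) (liftR n x) (liftL n y) (liftR n y) w)
      (\<Sum>x\<in>X. \<Sum>y\<in>Y. cmod (coeff n g1 x * coeff n g2 y) * L ^ (maxdeg n x + maxdeg n y))"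
  proof (intro Dnorm_bounded_sum \<rho> X Y Dnorm_bounded_scale)
    fix x y assume "x \<in> X" "y \<in> Y"
    then have "x \<in> mi n \<times> mi n" "y \<in> mi n \<times> mi n" using coeff_mi g1 g2 X_def Y_def by auto
    then show "Dnorm_bounded n \<rho> (starf n h (liftL n x) (liftR n x) (liftL n y) (liftR n y))
        (L ^ (maxdeg n x + maxdeg n y))"
      using Dnorm_bounded_starf[OF \<rho> \<delta> poch liftL_liftR(1,2) liftL_liftR(1,2)]
      unfolding L_def by (simp add: liftL_liftR(3,4))
  qed
  have star_eq: "star n h g1 g2 = (\<lambda>w. \<Sum>x\<in>X. \<Sum>y\<in>Y. (coeff n g1 x * coeff n g2 y)
      * starf n h (liftL n x) (liftR n x) (liftL n y) (liftR n y) w)"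
    by (rule ext, rule star_eq_sum_over) (use X Y X_def Y_def in auto)
  have "(\<Sum>x\<in>X. \<Sum>y\<in>Y. cmod (coeff n g1 x * coeff n g2 y) * L ^ (maxdeg n x + maxdeg n y))
      \<le> (\<Sum>x\<in>X. \<Sum>y\<in>Y. (cmod (coeff n g1 x) * L ^ bideg n x) * (cmod (coeff n g2 y) * L ^ bideg n y))"
  proof (intro sum_mono)
    fix x y
    have "L ^ (maxdeg n x + maxdeg n y) \<le> L ^ (bideg n x + bideg n y)"
      by (rule power_increasing) (use L maxdeg_le_bideg[of n x] maxdeg_le_bideg[of n y] in auto)
    then have "cmod (coeff n g1 x * coeff n g2 y) * L ^ (maxdeg n x + maxdeg n y)
        \<le> cmod (coeff n g1 x * coeff n g2 y) * L ^ (bideg n x + bideg n y)"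
      by (rule mult_left_mono) simp
    then show "cmod (coeff n g1 x * coeff n g2 y) * L ^ (maxdeg n x + maxdeg n y)
        \<le> (cmod (coeff n g1 x) * L ^ bideg n x) * (cmod (coeff n g2 y) * L ^ bideg n y)"
      by (simp only: norm_mult power_add mult_ac)
  qed
  also have "\<dots> = Dnorm n L g1 * Dnorm n L g2"
    unfolding Dnorm_eq_coeff_norm coeff_norm_def X_def Y_def by (rule sum_product[symmetric])
  finally have "(\<Sum>x\<in>X. \<Sum>y\<in>Y. cmod (coeff n g1 x * coeff n g2 y) * L ^ (maxdeg n x + maxdeg n y))
      \<le> Dnorm n L g1 * Dnorm n L g2" .
  with bounded show ?thesis unfolding star_eq L_def[symmetric] by (rule Dnorm_bounded_mono)
qed

section \<open>Topologies defined by a family of seminorms\<close>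

definition seminorm_ball :: "'a::ab_group_add set \<Rightarrow> ('i \<Rightarrow> 'a \<Rightarrow> real) \<Rightarrow> 'i set \<Rightarrow> 'a \<Rightarrow> real \<Rightarrow> 'a set" where
  "seminorm_ball V N F g e = {g'\<in>V. \<forall>i\<in>F. N i (g' - g) < e}"

definition seminorm_open :: "'a::ab_group_add set \<Rightarrow> 'i set \<Rightarrow> ('i \<Rightarrow> 'a \<Rightarrow> real) \<Rightarrow> 'a set \<Rightarrow> bool" where
  "seminorm_open V I N U \<longleftrightarrow> U \<subseteq> V \<and>
     (\<forall>g\<in>U. \<exists>F e. finite F \<and> F \<subseteq> I \<and> e > 0 \<and> seminorm_ball V N F g e \<subseteq> U)"

definition seminorm_topology :: "'a::ab_group_add set \<Rightarrow> 'i set \<Rightarrow> ('i \<Rightarrow> 'a \<Rightarrow> real) \<Rightarrow> 'a topology" where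
  "seminorm_topology V I N = topology (seminorm_open V I N)"

lemma seminorm_ball_mono:
  "F \<subseteq> F' \<Longrightarrow> e' \<le> e \<Longrightarrow> seminorm_ball V N F' g e' \<subseteq> seminorm_ball V N F g e"
  unfolding seminorm_ball_def by fastforce

lemma seminorm_openI:
  assumes "U \<subseteq> V"
    and "\<And>g. g \<in> U \<Longrightarrow> \<exists>F e. finite F \<and> F \<subseteq> I \<and> e > 0 \<and> seminorm_ball V N F g e \<subseteq> U"
  shows "seminorm_open V I N U"
  unfolding seminorm_open_def using assms by blast

lemma seminorm_openE:
  assumes "seminorm_open V I N U" "g \<in> U"
  obtains F e where "finite F" "F \<subseteq> I" "e > 0" "seminorm_ball V N F g e \<subseteq> U"
  using assms unfolding seminorm_open_def by blast

lemma seminorm_open_subset: "seminorm_open V I N U \<Longrightarrow> U \<subseteq> V"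
  unfolding seminorm_open_def by blast

lemma istopology_seminorm_open: "istopology (seminorm_open V I N)"
  unfolding istopology_def
proof (intro conjI allI impI)
  fix S T assume S: "seminorm_open V I N S" and T: "seminorm_open V I N T"
  show "seminorm_open V I N (S \<inter> T)"
  proof (rule seminorm_openI)
    show "S \<inter> T \<subseteq> V" using seminorm_open_subset[OF S] by blast
    fix g assume "g \<in> S \<inter> T"
    then have "g \<in> S" "g \<in> T" by auto
    obtain F1 e1 where 1: "finite F1" "F1 \<subseteq> I" "e1 > 0" "seminorm_ball V N F1 g e1 \<subseteq> S"
      using S \<open>g \<in> S\<close> by (rule seminorm_openE)
    obtain F2 e2 where 2: "finite F2" "F2 \<subseteq> I" "e2 > 0" "seminorm_ball V N F2 g e2 \<subseteq> T"
      using T \<open>g \<in> T\<close> by (rule seminorm_openE)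
    have "seminorm_ball V N (F1 \<union> F2) g (min e1 e2) \<subseteq> seminorm_ball V N F1 g e1"
      "seminorm_ball V N (F1 \<union> F2) g (min e1 e2) \<subseteq> seminorm_ball V N F2 g e2"
      by (rule seminorm_ball_mono; simp)+
    then have "seminorm_ball V N (F1 \<union> F2) g (min e1 e2) \<subseteq> S \<inter> T" using 1(4) 2(4) by blast
    moreover have "finite (F1 \<union> F2)" "F1 \<union> F2 \<subseteq> I" "min e1 e2 > 0" using 1 2 by simp_all
    ultimately show "\<exists>F e. finite F \<and> F \<subseteq> I \<and> e > 0 \<and> seminorm_ball V N F g e \<subseteq> S \<inter> T"
      by blast
  qed
next
  fix K assume K: "\<forall>U\<in>K. seminorm_open V I N U"
  show "seminorm_open V I N (\<Union>K)"
  proof (rule seminorm_openI)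
    show "\<Union>K \<subseteq> V" using K seminorm_open_subset by blast
    fix g assume "g \<in> \<Union>K"
    then obtain U where U: "U \<in> K" "g \<in> U" by blast
    with K obtain F e where "finite F" "F \<subseteq> I" "e > 0" "seminorm_ball V N F g e \<subseteq> U"
      by (meson seminorm_openE)
    with U show "\<exists>F e. finite F \<and> F \<subseteq> I \<and> e > 0 \<and> seminorm_ball V N F g e \<subseteq> \<Union>K"
      by blast
  qed
qed

lemma openin_seminorm_topology: "openin (seminorm_topology V I N) U \<longleftrightarrow> seminorm_open V I N U"
  unfolding seminorm_topology_def topology_inverse'[OF istopology_seminorm_open] ..

lemma topspace_seminorm_topology: "topspace (seminorm_topology V I N) = V"
proof
  show "topspace (seminorm_topology V I N) \<subseteq> V"
    unfolding topspace_def openin_seminorm_topology using seminorm_open_subset by blast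
  have "seminorm_open V I N V"
  proof (rule seminorm_openI)
    fix g
    show "\<exists>F e. finite F \<and> F \<subseteq> I \<and> e > 0 \<and> seminorm_ball V N F g e \<subseteq> V"
      by (intro exI[of _ "{}"] exI[of _ "1::real"]) (auto simp: seminorm_ball_def)
  qed simp
  then show "V \<subseteq> topspace (seminorm_topology V I N)"
    by (simp add: openin_subset openin_seminorm_topology)
qed

locale seminorm_family =
  fixes V :: "'a::ab_group_add set" and I :: "'i set" and N :: "'i \<Rightarrow> 'a \<Rightarrow> real"
  assumes diff_closed: "x \<in> V \<Longrightarrow> y \<in> V \<Longrightarrow> x - y \<in> V"
    and nonneg: "i \<in> I \<Longrightarrow> 0 \<le> N i x"
    and zero: "N i 0 = 0"
    and triangle: "i \<in> I \<Longrightarrow> x \<in> V \<Longrightarrow> y \<in> V \<Longrightarrow> N i (x + y) \<le> N i x + N i y"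
begin

lemma triangle_diff:
  assumes "i \<in> I" "x \<in> V" "y \<in> V" "z \<in> V"
  shows "N i (x - z) \<le> N i (x - y) + N i (y - z)"
  using triangle[OF assms(1) diff_closed[OF assms(2,3)] diff_closed[OF assms(3,4)]] by simp

lemma center_in_seminorm_ball: "g \<in> V \<Longrightarrow> e > 0 \<Longrightarrow> g \<in> seminorm_ball V N F g e"
  unfolding seminorm_ball_def by (simp add: zero)

lemma seminorm_open_ball:
  assumes g: "g \<in> V" and F: "finite F" "F \<subseteq> I"
  shows "seminorm_open V I N (seminorm_ball V N F g e)"
  unfolding seminorm_open_def
proof (intro conjI ballI)
  show "seminorm_ball V N F g e \<subseteq> V" unfolding seminorm_ball_def by blast
  fix g' assume "g' \<in> seminorm_ball V N F g e"
  then have g': "g' \<in> V" and near: "\<forall>i\<in>F. N i (g' - g) < e"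
    unfolding seminorm_ball_def by auto
  define e' where "e' = Min (insert 1 ((\<lambda>i. e - N i (g' - g)) ` F))"
  have "e' > 0" unfolding e'_def using F near by auto
  have e': "e' \<le> e - N i (g' - g)" if "i \<in> F" for i
    unfolding e'_def using F that by (auto intro: Min_le)
  have "seminorm_ball V N F g' e' \<subseteq> seminorm_ball V N F g e"
  proof
    fix g'' assume "g'' \<in> seminorm_ball V N F g' e'"
    then have g'': "g'' \<in> V" "\<forall>i\<in>F. N i (g'' - g') < e'"
      unfolding seminorm_ball_def by auto
    have "N i (g'' - g) < e" if "i \<in> F" for i
    proof -
      have "N i (g'' - g) \<le> N i (g'' - g') + N i (g' - g)"
        using that F g g' g'' by (intro triangle_diff) auto
      moreover have "N i (g'' - g') < e'" using g''(2) that by blast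
      ultimately show ?thesis using e'[OF that] by linarith
    qed
    then show "g'' \<in> seminorm_ball V N F g e" unfolding seminorm_ball_def using g'' by auto
  qed
  then show "\<exists>F' e''. finite F' \<and> F' \<subseteq> I \<and> e'' > 0 \<and> seminorm_ball V N F' g' e'' \<subseteq> seminorm_ball V N F g e"
    using F \<open>e' > 0\<close> by (intro exI[of _ F] exI[of _ e']) simp
qed

end

locale seminorm_bounded_product = seminorm_family +
  fixes B :: "'a::ab_group_add \<Rightarrow> 'a \<Rightarrow> 'a"
  assumes closed: "a \<in> V \<Longrightarrow> b \<in> V \<Longrightarrow> B a b \<in> V"
    and split: "a \<in> V \<Longrightarrow> a' \<in> V \<Longrightarrow> b \<in> V \<Longrightarrow> b' \<in> V \<Longrightarrow>
      B a' b' - B a b = B (a' - a) b' + B a (b' - b)"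
    and bounded: "i \<in> I \<Longrightarrow> \<exists>j\<in>I. \<forall>a\<in>V. \<forall>b\<in>V. N i (B a b) \<le> N j a * N j b"
begin

lemma diff_le:
  assumes ij: "i \<in> I" "j \<in> I" and bound: "\<forall>a\<in>V. \<forall>b\<in>V. N i (B a b) \<le> N j a * N j b"
    and V: "a \<in> V" "a' \<in> V" "b \<in> V" "b' \<in> V"
  shows "N i (B a' b' - B a b) \<le> N j (a' - a) * (N j (b' - b) + N j b) + N j a * N j (b' - b)"
proof -
  have "N j b' \<le> N j (b' - b) + N j b"
    using triangle[OF ij(2) diff_closed[OF V(4,3)] V(3)] by simp
  then have "N j (a' - a) * N j b' \<le> N j (a' - a) * (N j (b' - b) + N j b)"
    by (rule mult_left_mono) (rule nonneg[OF ij(2)])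
  moreover have "N i (B a' b' - B a b) \<le> N i (B (a' - a) b') + N i (B a (b' - b))"
    unfolding split[OF V] using V by (intro triangle ij closed diff_closed)
  moreover have "N i (B (a' - a) b') \<le> N j (a' - a) * N j b'"
    "N i (B a (b' - b)) \<le> N j a * N j (b' - b)"
    using bound V diff_closed by auto
  ultimately show ?thesis by linarith
qed

text \<open>With M bounding N_j a + N_j b for the finitely many j involved, the estimate of
  diff_le gives N_i (B a' b' - B a b) \<le> \<delta> (\<delta> + M) + M \<delta> \<le> \<delta> (1 + 2 M).\<close>

lemma product_ball_subset:
  assumes a: "a \<in> V" and b: "b \<in> V" and F: "finite F" "F \<subseteq> I" and "e > 0"
  obtains F' \<delta> where "finite F'" "F' \<subseteq> I" "0 < \<delta>"
    "\<And>a' b'. a' \<in> seminorm_ball V N F' a \<delta> \<Longrightarrow> b' \<in> seminorm_ball V N F' b \<delta> \<Longrightarrow>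
      B a' b' \<in> seminorm_ball V N F (B a b) e"
proof -
  have "\<forall>i\<in>F. \<exists>j. j \<in> I \<and> (\<forall>a\<in>V. \<forall>b\<in>V. N i (B a b) \<le> N j a * N j b)"
    using bounded F(2) by blast
  then obtain j where j: "\<And>i. i \<in> F \<Longrightarrow> j i \<in> I"
    and bound: "\<And>i. i \<in> F \<Longrightarrow> \<forall>a\<in>V. \<forall>b\<in>V. N i (B a b) \<le> N (j i) a * N (j i) b"
    by (metis bchoice)
  define M where "M = (\<Sum>i\<in>F. N (j i) a + N (j i) b)"
  define \<delta> where "\<delta> = min 1 (e / (2 * M + 2))"
  have N_ge: "0 \<le> N (j i) x" if "i \<in> F" for i x by (rule nonneg[OF j[OF that]])
  have "0 \<le> M" unfolding M_def by (intro sum_nonneg add_nonneg_nonneg N_ge)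
  have M: "N (j i) a + N (j i) b \<le> M" if "i \<in> F" for i
    unfolding M_def using F(1) that N_ge by (intro member_le_sum add_nonneg_nonneg) auto
  have "0 < \<delta>" "\<delta> \<le> 1" unfolding \<delta>_def using \<open>e > 0\<close> \<open>0 \<le> M\<close> by auto
  have "\<delta> * (1 + 2 * M) \<le> e / (2 * M + 2) * (1 + 2 * M)"
    unfolding \<delta>_def by (rule mult_right_mono) (use \<open>0 \<le> M\<close> in auto)
  also have "\<dots> < e" using \<open>e > 0\<close> \<open>0 \<le> M\<close> by (simp add: field_simps)
  finally have \<delta>_e: "\<delta> * (1 + 2 * M) < e" .
  show ?thesis
  proof (rule that[of "j ` F" \<delta>])
    show "finite (j ` F)" "j ` F \<subseteq> I" "0 < \<delta>" using F j \<open>0 < \<delta>\<close> by auto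
    fix a' b' assume a': "a' \<in> seminorm_ball V N (j ` F) a \<delta>" and b': "b' \<in> seminorm_ball V N (j ` F) b \<delta>"
    then have "a' \<in> V" "b' \<in> V" unfolding seminorm_ball_def by auto
    have "N i (B a' b' - B a b) < e" if i: "i \<in> F" for i
    proof -
      have da: "N (j i) (a' - a) < \<delta>" and db: "N (j i) (b' - b) < \<delta>"
        using a' b' i unfolding seminorm_ball_def by auto
      have N_nonneg: "0 \<le> N (j i) a" "0 \<le> N (j i) b" "0 \<le> N (j i) (a' - a)" "0 \<le> N (j i) (b' - b)"
        using N_ge[OF i] by auto
      have "N i (B a' b' - B a b)
          \<le> N (j i) (a' - a) * (N (j i) (b' - b) + N (j i) b) + N (j i) a * N (j i) (b' - b)"
        using F(2) i j bound a b \<open>a' \<in> V\<close> \<open>b' \<in> V\<close> by (intro diff_le) auto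
      also have "\<dots> \<le> \<delta> * (\<delta> + M) + M * \<delta>"
      proof (rule add_mono)
        show "N (j i) (a' - a) * (N (j i) (b' - b) + N (j i) b) \<le> \<delta> * (\<delta> + M)"
          by (rule mult_mono) (use da db M[OF i] N_nonneg in linarith)+
        show "N (j i) a * N (j i) (b' - b) \<le> M * \<delta>"
          by (rule mult_mono) (use db M[OF i] N_nonneg \<open>0 \<le> M\<close> in linarith)+
      qed
      also have "\<dots> \<le> \<delta> * (1 + 2 * M)"
        using \<open>\<delta> \<le> 1\<close> \<open>0 < \<delta>\<close> by (simp add: algebra_simps mult_left_le)
      finally show ?thesis using \<delta>_e by linarith
    qed
    then show "B a' b' \<in> seminorm_ball V N F (B a b) e"
      unfolding seminorm_ball_def using closed \<open>a' \<in> V\<close> \<open>b' \<in> V\<close> by auto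
  qed
qed

theorem continuous_map_product:
  "continuous_map (prod_topology (seminorm_topology V I N) (seminorm_topology V I N))
    (seminorm_topology V I N) (\<lambda>(a, b). B a b)"
  unfolding continuous_map topspace_prod_topology topspace_seminorm_topology
proof (intro conjI allI impI)
  let ?T = "seminorm_topology V I N"
  show "(\<lambda>(a, b). B a b) ` (V \<times> V) \<subseteq> V" using closed by auto
  fix U assume "openin ?T U"
  then have U: "seminorm_open V I N U" by (simp add: openin_seminorm_topology)
  define S where "S = {x \<in> V \<times> V. (\<lambda>(a, b). B a b) x \<in> U}"
  show "openin (prod_topology ?T ?T) {x \<in> V \<times> V. (\<lambda>(a, b). B a b) x \<in> U}"
    unfolding S_def[symmetric] openin_prod_topology_alt
  proof (intro allI impI)
    fix a b assume "(a, b) \<in> S"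
    then have a: "a \<in> V" and b: "b \<in> V" and "B a b \<in> U" unfolding S_def by auto
    obtain F e where F: "finite F" "F \<subseteq> I" and "e > 0"
      and ball_U: "seminorm_ball V N F (B a b) e \<subseteq> U"
      using U \<open>B a b \<in> U\<close> by (rule seminorm_openE)
    obtain F' \<delta> where F': "finite F'" "F' \<subseteq> I" and "0 < \<delta>"
      and maps: "\<And>a' b'. a' \<in> seminorm_ball V N F' a \<delta> \<Longrightarrow> b' \<in> seminorm_ball V N F' b \<delta> \<Longrightarrow>
        B a' b' \<in> seminorm_ball V N F (B a b) e"
      using product_ball_subset[OF a b F \<open>e > 0\<close>] by blast
    have "seminorm_ball V N F' a \<delta> \<times> seminorm_ball V N F' b \<delta> \<subseteq> S"
      using maps ball_U unfolding S_def seminorm_ball_def by fastforce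
    moreover have "openin ?T (seminorm_ball V N F' a \<delta>)" "openin ?T (seminorm_ball V N F' b \<delta>)"
      using a b F' by (simp_all add: openin_seminorm_topology seminorm_open_ball)
    moreover have "a \<in> seminorm_ball V N F' a \<delta>" "b \<in> seminorm_ball V N F' b \<delta>"
      using a b \<open>0 < \<delta>\<close> by (simp_all add: center_in_seminorm_ball)
    ultimately show "\<exists>U V'. openin ?T U \<and> openin ?T V' \<and> a \<in> U \<and> b \<in> V' \<and> U \<times> V' \<subseteq> S"
      by blast
  qed
qed

end

lemma coeff_diff:
  assumes "g1 \<in> PD n" "g2 \<in> PD n"
  shows "coeff n (\<lambda>w. g1 w - g2 w) = (\<lambda>x. coeff n g1 x - coeff n g2 x)"
proof -
  have c1: "coeffs_ok n (coeff n g1)" "comb n (coeff n g1) = g1" using coeff_PD[OF assms(1)] by auto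
  have c2: "coeffs_ok n (coeff n g2)" "comb n (coeff n g2) = g2" using coeff_PD[OF assms(2)] by auto
  have ok: "coeffs_ok n (\<lambda>x. coeff n g1 x + (-1) * coeff n g2 x)"
    by (intro coeffs_ok_add coeffs_ok_scale c1 c2)
  have "comb n (\<lambda>x. coeff n g1 x + (-1) * coeff n g2 x) w
      = comb n (coeff n g1) w + (-1) * comb n (coeff n g2) w" for w
    by (simp only: comb_add[OF c1(1) coeffs_ok_scale[OF c2(1)]] comb_scale[OF c2(1)])
  then have "comb n (\<lambda>x. coeff n g1 x + (-1) * coeff n g2 x) = (\<lambda>w. g1 w - g2 w)"
    using c1(2) c2(2) by (simp add: fun_eq_iff)
  then have "coeff n (\<lambda>w. g1 w - g2 w) = (\<lambda>x. coeff n g1 x + (-1) * coeff n g2 x)"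
    using coeff_comb[OF ok] by simp
  then show ?thesis by simp
qed

lemma star_split:
  assumes g1: "g1 \<in> PD n" and g1': "g1' \<in> PD n" and g2: "g2 \<in> PD n" and g2': "g2' \<in> PD n"
  shows "star n h g1' g2' - star n h g1 g2 = star n h (g1' - g1) g2' + star n h g1 (g2' - g2)"
proof (rule ext)
  fix w
  define X where "X = {x. coeff n g1' x \<noteq> 0} \<union> {x. coeff n g1 x \<noteq> 0}"
  define Y where "Y = {y. coeff n g2' y \<noteq> 0} \<union> {y. coeff n g2 y \<noteq> 0}"
  define \<Phi> where "\<Phi> x y = starf n h (liftL n x) (liftR n x) (liftL n y) (liftR n y) w" for x y
  have X: "finite X" and Y: "finite Y" unfolding X_def Y_def using coeff_finite g1 g2 g1' g2' by auto
  have diff1: "coeff n (g1' - g1) = (\<lambda>x. coeff n g1' x - coeff n g1 x)"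
    unfolding fun_diff_def by (rule coeff_diff[OF g1' g1])
  have diff2: "coeff n (g2' - g2) = (\<lambda>y. coeff n g2' y - coeff n g2 y)"
    unfolding fun_diff_def by (rule coeff_diff[OF g2' g2])
  have "star n h g1' g2' w - star n h g1 g2 w
      = (\<Sum>x\<in>X. \<Sum>y\<in>Y. coeff n g1' x * coeff n g2' y * \<Phi> x y)
      - (\<Sum>x\<in>X. \<Sum>y\<in>Y. coeff n g1 x * coeff n g2 y * \<Phi> x y)"
    unfolding \<Phi>_def by (subst (1 2) star_eq_sum_over[OF X _ Y]) (auto simp: X_def Y_def)
  also have "\<dots> = (\<Sum>x\<in>X. \<Sum>y\<in>Y. (coeff n g1' x - coeff n g1 x) * coeff n g2' y * \<Phi> x y)
      + (\<Sum>x\<in>X. \<Sum>y\<in>Y. coeff n g1 x * (coeff n g2' y - coeff n g2 y) * \<Phi> x y)"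
    by (simp add: sum_subtractf sum.distrib[symmetric] algebra_simps)
  also have "\<dots> = star n h (g1' - g1) g2' w + star n h g1 (g2' - g2) w"
    unfolding \<Phi>_def
    by (subst (1 2) star_eq_sum_over[OF X _ Y]) (auto simp: X_def Y_def diff1 diff2)
  finally show "(star n h g1' g2' - star n h g1 g2) w = (star n h (g1' - g1) g2' + star n h g1 (g2' - g2)) w"
    by simp
qed

lemma seminorm_family_Dnorm: "seminorm_family (PD n) {0<..} (Dnorm n)"
proof
  show "x - y \<in> PD n" if "x \<in> PD n" "y \<in> PD n" for x y
    using PD_diff[OF that] unfolding fun_diff_def .
  show "0 \<le> Dnorm n \<rho> x" if "\<rho> \<in> {0<..}" for \<rho> x
    using that by (simp add: Dnorm_nonneg)
  show "Dnorm n \<rho> 0 = 0" for \<rho>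
    using Dnorm_zero unfolding zero_fun_def .
  show "Dnorm n \<rho> (x + y) \<le> Dnorm n \<rho> x + Dnorm n \<rho> y"
    if "\<rho> \<in> {0<..}" "x \<in> PD n" "y \<in> PD n" for \<rho> x y
    using Dnorm_triangle[of \<rho> x n y] that unfolding plus_fun_def by simp
qed

lemma Dtop_eq_seminorm_topology: "Dtop n = seminorm_topology (PD n) {0<..} (Dnorm n)"
  unfolding Dtop_def seminorm_topology_def seminorm_open_def seminorm_ball_def fun_diff_def ..

lemma seminorm_bounded_product_star:
  assumes "h \<in> Hset"
  shows "seminorm_bounded_product (PD n) {0<..} (Dnorm n) (star n h)"
proof (intro_locales)
  obtain \<delta> where \<delta>: "0 < \<delta>" "\<delta> \<le> 1" and poch: "\<And>k. \<delta> ^ k * fact k \<le> cmod (pochhammer (1 / (2 * h)) k)"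
    using pochhammer_factorial_lower_bound Hset_pochhammer_factor_nonzero[OF assms] by blast
  show "seminorm_family (PD n) {0<..} (Dnorm n)" by (rule seminorm_family_Dnorm)
  show "seminorm_bounded_product_axioms (PD n) {0<..} (Dnorm n) (star n h)"
  proof
    show "star n h a b \<in> PD n" if "a \<in> PD n" "b \<in> PD n" for a b
      using Dnorm_bounded_star[OF _ \<delta> poch that, of 1] unfolding Dnorm_bounded_def by simp
    show "star n h a' b' - star n h a b = star n h (a' - a) b' + star n h a (b' - b)"
      if "a \<in> PD n" "a' \<in> PD n" "b \<in> PD n" "b' \<in> PD n" for a a' b b'
      using star_split that by blast
    fix \<rho> :: real assume "\<rho> \<in> {0<..}"
    then have "\<forall>a\<in>PD n. \<forall>b\<in>PD n. Dnorm n \<rho> (star n h a b)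
        \<le> Dnorm n (star_radius n h \<delta> \<rho>) a * Dnorm n (star_radius n h \<delta> \<rho>) b"
      using Dnorm_bounded_star[OF _ \<delta> poch] unfolding Dnorm_bounded_def by simp
    moreover have "star_radius n h \<delta> \<rho> \<in> {0<..}" using star_radius_ge_1[OF \<delta>, of n h \<rho>] by simp
    ultimately show "\<exists>\<sigma>\<in>{0<..}. \<forall>a\<in>PD n. \<forall>b\<in>PD n.
        Dnorm n \<rho> (star n h a b) \<le> Dnorm n \<sigma> a * Dnorm n \<sigma> b"
      by blast
  qed
qed

theorem theorem3p7:
  fixes n :: nat and h :: complex
  assumes "n \<ge> 1" and "h \<in> Hset"
  shows "continuous_map (prod_topology (Dtop n) (Dtop n)) (Dtop n) (\<lambda>(a, b). star n h a b)"
proof -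
  \<comment> \<open>The argument works for every n.\<close>
  show ?thesis
    using seminorm_bounded_product.continuous_map_product[OF seminorm_bounded_product_star[OF \<open>h \<in> Hset\<close>]]
    unfolding Dtop_eq_seminorm_topology .
qed

end
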